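(* Assume the standing setting described in the context, and suppose that $\{i\in I:C(A_i)=\infty\}=\{\ell\}$ with $\ell\in I^-$ and $A_i\cap A_\ell=\varnothing$ for all $i\ne\ell$. For each compact $K_\ell\subset A_\ell$ let $\boldsymbol A_{K_\ell}=(A^{K_\ell}_i)_{i\in I}$ be the condenser with $A^{K_\ell}_i=A_i$ for $i\ne\ell$ and $A^{K_\ell}_\ell=K_\ell$ (same signs), and let $G_\chi(\boldsymbol A_{K_\ell},\boldsymbol a,g)$ be the infimum of $G_\chi$ over vector measures of finite energy on $\boldsymbol A_{K_\ell}$ with $\int g\,d\mu^i=a_i$ for all $i\in I$ (with $\inf\varnothing=+\infty$). Then $$G_\chi(\boldsymbol A,\boldsymbol a,g)=\lim_{K_\ell\uparrow A_\ell}G_\chi(\boldsymbol A_{K_\ell},\boldsymbol a,g),$$ the limit being taken along the increasing filtering family of all compact subsets of $A_\ell$ ordered by inclusion.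
   Context: Standing setting. $\mathrm X$ noncompact locally compact Hausdorff; $\mathfrak M$ real Radon measures, vague topology; $S(\nu)$ support. Kernel $\kappa:\mathrm X\times\mathrm X\to[0,\infty]$ lower semicontinuous, symmetric; $\kappa(\nu,\nu_1)=\int\kappa\,d(\nu\otimes\nu_1)$, $\kappa(x,\nu)=\int\kappa(x,y)d\nu(y)$; $\mathcal E$ = measures with $\kappa(\nu,\nu)$ well defined and finite. Assumed: (a) strictly positive definite ($\|\nu\|=\kappa(\nu,\nu)^{1/2}$ a norm on the pre-Hilbert space $\mathcal E$); (b) consistent: every strong Cauchy net in $\mathcal E^+=\{\nu\in\mathcal E:\nu\ge0\}$ converges strongly to each of its vague cluster points; (c) $\kappa(x,y)$ finite, continuous for $x\ne y$; (d) for each $\varepsilon>0$, compact $K$ there is compact $K'$ with $\kappa(x,y)<\varepsilon$ for $x\in K,y\notin K'$; (e) generalized maximum principle with constant $h\ge1$. $\mathcal E^+_E$: elements of $\mathcal E^+$ concentrated on $E$; interior capacity $C(E)=1/\inf\{\kappa(\nu,\nu):\nu\in\mathcal E^+_E,\nu(E)=1\}$; "n.e." = outside a set of interior capacity zero. Condenser: disjoint countable $I^+,I^-$, $I=I^+\cup I^-$; nonempty closed $A_i$, locally finite, $A_i\cap A_j=\varnothing$ for $i\in I^+,j\in I^-$; $\alpha_i=\pm1$ on $I^\pm$; $A^\pm=\bigcup_{I^\pm}A_i$, $A=\bigcup A_i$; $\sup_{A^+\times A^-}\kappa<\infty$. Vector measures $\boldsymbol\mu=(\mu^i)$, $\mu^i\ge0$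 concentrated on $A_i$; $R\boldsymbol\mu=\sum\alpha_i\mu^i$; $\mathcal E^+(\boldsymbol A)$ those of finite energy $\sum_{i,j}\alpha_i\alpha_j\kappa(\mu^i,\mu^j)$. External field: bounded signed $\chi\in\mathcal E$, $S(\chi^+)\cap A^-=\varnothing$, $S(\chi^-)\cap A^+=\varnothing$; $G_\chi(\boldsymbol\mu)=\|R\boldsymbol\mu\|^2+2\kappa(\chi,R\boldsymbol\mu)$. $g$ continuous on $A$, $\inf_Ag>0$, and for each $i$ either $g|_{A_i}$ bounded or $g^{r_i}\le\kappa(\cdot,\nu_i)$ n.e. on $A_i$ for some $r_i>1,\nu_i\in\mathcal E$. $\boldsymbol a=(a_i)$, $a_i>0$, $\sum a_i<\infty$. $G_\chi(\boldsymbol A,\boldsymbol a,g)$ = infimum of $G_\chi$ over $\{\boldsymbol\mu\in\mathcal E^+(\boldsymbol A):\int g\,d\mu^i=a_i\ \forall i\in I\}$, assumed $<\infty$. *)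

theory Defs
  imports "HOL-Analysis.Analysis"
begin

definition radon :: "'a::t2_space measure \<Rightarrow> bool" where
  "radon M \<longleftrightarrow> sets M = sets borel \<and>
     (\<forall>K. compact K \<longrightarrow> emeasure M K < \<infinity>) \<and>
     (\<forall>U. open U \<longrightarrow> emeasure M U = (SUP K\<in>{K. compact K \<and> K \<subseteq> U}. emeasure M K)) \<and>
     (\<forall>B\<in>sets borel. emeasure M B = (INF U\<in>{U. open U \<and> B \<subseteq> U}. emeasure M U))"

text \<open>A real (signed) Radon measure is represented by its Jordan decomposition
(positive part, negative part): two positive Radon measures that are disjoint in the
lattice sense (their infimum vanishes on every compact set).\<close>
type_synonym 'a smeasure = "'a measure \<times> 'a measure"

definition signed_radon :: "'a::t2_space smeasure \<Rightarrow> bool" where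
  "signed_radon \<nu> \<longleftrightarrow> radon (fst \<nu>) \<and> radon (snd \<nu>) \<and>
     (\<forall>K. compact K \<longrightarrow>
        (INF C\<in>{C\<in>sets borel. C \<subseteq> K}. emeasure (fst \<nu>) C + emeasure (snd \<nu>) (K - C)) = 0)"

definition support :: "'a::topological_space measure \<Rightarrow> 'a set" where
  "support M = {x. \<forall>U. open U \<longrightarrow> x \<in> U \<longrightarrow> emeasure M U \<noteq> 0}"

definition concentrated :: "'a::topological_space measure \<Rightarrow> 'a set \<Rightarrow> bool" where
  "concentrated \<nu> E \<longleftrightarrow> (\<exists>B\<in>sets borel. - E \<subseteq> B \<and> emeasure \<nu> B = 0)"

definition Cc :: "('a::topological_space \<Rightarrow> real) \<Rightarrow> bool" where
  "Cc f \<longleftrightarrow> continuous_on UNIV f \<and> compact (closure {x. f x \<noteq> 0})"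

definition en :: "('a \<Rightarrow> 'a \<Rightarrow> ennreal) \<Rightarrow> 'a measure \<Rightarrow> 'a measure \<Rightarrow> ennreal" where
  "en \<kappa> \<mu> \<nu> = (\<integral>\<^sup>+ x. (\<integral>\<^sup>+ y. \<kappa> x y \<partial>\<nu>) \<partial>\<mu>)"

definition senergy :: "('a \<Rightarrow> 'a \<Rightarrow> ennreal) \<Rightarrow> 'a smeasure \<Rightarrow> 'a smeasure \<Rightarrow> ereal" where
  "senergy \<kappa> \<nu> \<nu>' =
     (enn2ereal (en \<kappa> (fst \<nu>) (fst \<nu>')) + enn2ereal (en \<kappa> (snd \<nu>) (snd \<nu>')))
   - (enn2ereal (en \<kappa> (fst \<nu>) (snd \<nu>')) + enn2ereal (en \<kappa> (snd \<nu>) (fst \<nu>')))"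

definition pot :: "('a \<Rightarrow> 'a \<Rightarrow> ennreal) \<Rightarrow> 'a \<Rightarrow> 'a smeasure \<Rightarrow> ereal" where
  "pot \<kappa> x \<nu> = enn2ereal (\<integral>\<^sup>+ y. \<kappa> x y \<partial>fst \<nu>) - enn2ereal (\<integral>\<^sup>+ y. \<kappa> x y \<partial>snd \<nu>)"

definition energy_space :: "('a::t2_space \<Rightarrow> 'a \<Rightarrow> ennreal) \<Rightarrow> 'a smeasure \<Rightarrow> bool" where
  "energy_space \<kappa> \<nu> \<longleftrightarrow> signed_radon \<nu> \<and>
     en \<kappa> (fst \<nu>) (fst \<nu>) + en \<kappa> (snd \<nu>) (snd \<nu>) < \<infinity> \<and> en \<kappa> (fst \<nu>) (snd \<nu>) < \<infinity>"

definition Eplus :: "('a::t2_space \<Rightarrow> 'a \<Rightarrow> ennreal) \<Rightarrow> 'a measure \<Rightarrow> bool" where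
  "Eplus \<kappa> \<mu> \<longleftrightarrow> radon \<mu> \<and> en \<kappa> \<mu> \<mu> < \<infinity>"

definition pdist :: "('a \<Rightarrow> 'a \<Rightarrow> ennreal) \<Rightarrow> 'a measure \<Rightarrow> 'a measure \<Rightarrow> real" where
  "pdist \<kappa> \<mu> \<nu> = sqrt (enn2real (en \<kappa> \<mu> \<mu>) + enn2real (en \<kappa> \<nu> \<nu>) - 2 * enn2real (en \<kappa> \<mu> \<nu>))"

text \<open>Interior capacity \<open>C(E) = 1 / inf {\<kappa>(\<nu>,\<nu>) : \<nu> \<in> \<E>\<^sup>+_E, \<nu>(E) = 1}\<close>
(with \<open>1/0 = \<infinity>\<close>, \<open>1/\<infinity> = 0\<close>, \<open>inf \<emptyset> = \<infinity>\<close>).\<close>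
definition capacity :: "('a::t2_space \<Rightarrow> 'a \<Rightarrow> ennreal) \<Rightarrow> 'a set \<Rightarrow> ennreal" where
  "capacity \<kappa> E = 1 / (INF \<nu>\<in>{\<nu>. Eplus \<kappa> \<nu> \<and> concentrated \<nu> E \<and> emeasure \<nu> UNIV = 1}. en \<kappa> \<nu> \<nu>)"

definition nearly_everywhere :: "('a::t2_space \<Rightarrow> 'a \<Rightarrow> ennreal) \<Rightarrow> 'a set \<Rightarrow> ('a \<Rightarrow> bool) \<Rightarrow> bool" where
  "nearly_everywhere \<kappa> S P \<longleftrightarrow> (\<exists>N. capacity \<kappa> N = 0 \<and> (\<forall>x\<in>S - N. P x))"

definition strictly_pos_def :: "('a::t2_space \<Rightarrow> 'a \<Rightarrow> ennreal) \<Rightarrow> bool" where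
  "strictly_pos_def \<kappa> \<longleftrightarrow> (\<forall>\<nu>. energy_space \<kappa> \<nu> \<longrightarrow>
      senergy \<kappa> \<nu> \<nu> \<ge> 0 \<and>
      (senergy \<kappa> \<nu> \<nu> = 0 \<longrightarrow> emeasure (fst \<nu>) UNIV = 0 \<and> emeasure (snd \<nu>) UNIV = 0))"

text \<open>Nets are represented by filters. \<open>\<mu>\<^sub>0\<close> is a vague cluster point of \<open>F\<close>.\<close>
definition vague_cluster :: "'a::topological_space measure filter \<Rightarrow> 'a measure \<Rightarrow> bool" where
  "vague_cluster F \<mu>0 \<longleftrightarrow> (\<forall>fs. finite fs \<longrightarrow> (\<forall>f\<in>fs. Cc f) \<longrightarrow> (\<forall>\<epsilon>>0.
      (\<exists>\<^sub>F \<mu> in F. \<forall>f\<in>fs. \<bar>integral\<^sup>L \<mu> f - integral\<^sup>L \<mu>0 f\<bar> < \<epsilon>)))"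

definition strong_cauchy :: "('a \<Rightarrow> 'a \<Rightarrow> ennreal) \<Rightarrow> 'a measure filter \<Rightarrow> bool" where
  "strong_cauchy \<kappa> F \<longleftrightarrow> (\<forall>\<epsilon>>0. \<forall>\<^sub>F p in F \<times>\<^sub>F F. pdist \<kappa> (fst p) (snd p) < \<epsilon>)"

definition consistent :: "('a::t2_space \<Rightarrow> 'a \<Rightarrow> ennreal) \<Rightarrow> bool" where
  "consistent \<kappa> \<longleftrightarrow> (\<forall>F. (\<forall>\<^sub>F \<mu> in F. Eplus \<kappa> \<mu>) \<longrightarrow> strong_cauchy \<kappa> F \<longrightarrow>
     (\<forall>\<mu>0. radon \<mu>0 \<longrightarrow> vague_cluster F \<mu>0 \<longrightarrow>
        Eplus \<kappa> \<mu>0 \<and> ((\<lambda>\<mu>. pdist \<kappa> \<mu> \<mu>0) \<longlongrightarrow> 0) F))"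

definition gen_max_principle :: "('a::t2_space \<Rightarrow> 'a \<Rightarrow> ennreal) \<Rightarrow> real \<Rightarrow> bool" where
  "gen_max_principle \<kappa> h \<longleftrightarrow> (\<forall>\<nu> c. Eplus \<kappa> \<nu> \<longrightarrow> c \<ge> 0 \<longrightarrow>
     (AE x in \<nu>. (\<integral>\<^sup>+ y. \<kappa> x y \<partial>\<nu>) \<le> ennreal c) \<longrightarrow>
     (\<forall>x. (\<integral>\<^sup>+ y. \<kappa> x y \<partial>\<nu>) \<le> ennreal (h * c)))"

definition condenser ::
  "('a::t2_space \<Rightarrow> 'a \<Rightarrow> ennreal) \<Rightarrow> nat set \<Rightarrow> nat set \<Rightarrow> (nat \<Rightarrow> 'a set) \<Rightarrow> bool" where
  "condenser \<kappa> Ip In A \<longleftrightarrow> Ip \<inter> In = {} \<and>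
     (\<forall>i\<in>Ip \<union> In. closed (A i) \<and> A i \<noteq> {}) \<and>
     (\<forall>K. compact K \<longrightarrow> finite {i\<in>Ip \<union> In. A i \<inter> K \<noteq> {}}) \<and>
     (\<forall>i\<in>Ip. \<forall>j\<in>In. A i \<inter> A j = {}) \<and>
     (SUP p\<in>(\<Union>i\<in>Ip. A i) \<times> (\<Union>j\<in>In. A j). \<kappa> (fst p) (snd p)) < \<infinity>"

definition summeas :: "(nat \<Rightarrow> 'a::topological_space measure) \<Rightarrow> nat set \<Rightarrow> 'a measure" where
  "summeas \<mu> J = measure_of UNIV (sets borel) (\<lambda>B. \<Sum>i. if i \<in> J then emeasure (\<mu> i) B else 0)"

text \<open>\<open>R\<mu> = \<Sum> \<alpha>\<^sub>i \<mu>\<^sup>i\<close>, as (positive part, negative part).\<close>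
definition Rmeas :: "nat set \<Rightarrow> nat set \<Rightarrow> (nat \<Rightarrow> 'a::topological_space measure) \<Rightarrow> 'a smeasure" where
  "Rmeas Ip In \<mu> = (summeas \<mu> Ip, summeas \<mu> In)"

text \<open>Finite vector energy: the (unordered, countable) series
\<open>\<Sum>\<^sub>i\<^sub>,\<^sub>j \<alpha>\<^sub>i\<alpha>\<^sub>j \<kappa>(\<mu>\<^sup>i,\<mu>\<^sup>j)\<close> has finite positive and finite negative part.\<close>
definition finite_vec_energy ::
  "('a \<Rightarrow> 'a \<Rightarrow> ennreal) \<Rightarrow> nat set \<Rightarrow> nat set \<Rightarrow> (nat \<Rightarrow> 'a measure) \<Rightarrow> bool" where
  "finite_vec_energy \<kappa> Ip In \<mu> \<longleftrightarrow>
     (\<Sum>\<^sub>\<infinity> p\<in>(Ip \<times> Ip) \<union> (In \<times> In). en \<kappa> (\<mu> (fst p)) (\<mu> (snd p))) < \<infinity> \<and>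
     (\<Sum>\<^sub>\<infinity> p\<in>(Ip \<times> In) \<union> (In \<times> Ip). en \<kappa> (\<mu> (fst p)) (\<mu> (snd p))) < \<infinity>"

definition admissible ::
  "('a::t2_space \<Rightarrow> 'a \<Rightarrow> ennreal) \<Rightarrow> nat set \<Rightarrow> nat set \<Rightarrow> (nat \<Rightarrow> 'a set) \<Rightarrow> (nat \<Rightarrow> real)
    \<Rightarrow> ('a \<Rightarrow> real) \<Rightarrow> (nat \<Rightarrow> 'a measure) set" where
  "admissible \<kappa> Ip In A a g = {\<mu>.
     (\<forall>i\<in>Ip \<union> In. radon (\<mu> i) \<and> concentrated (\<mu> i) (A i) \<and>
        (\<integral>\<^sup>+ x. ennreal (g x) * indicator (A i) x \<partial>\<mu> i) = ennreal (a i)) \<and>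
     finite_vec_energy \<kappa> Ip In \<mu>}"

definition Gchi ::
  "('a::t2_space \<Rightarrow> 'a \<Rightarrow> ennreal) \<Rightarrow> 'a smeasure \<Rightarrow> nat set \<Rightarrow> nat set \<Rightarrow> (nat \<Rightarrow> 'a measure) \<Rightarrow> ereal" where
  "Gchi \<kappa> chi Ip In \<mu> = senergy \<kappa> (Rmeas Ip In \<mu>) (Rmeas Ip In \<mu>) + 2 * senergy \<kappa> chi (Rmeas Ip In \<mu>)"

definition Ginf ::
  "('a::t2_space \<Rightarrow> 'a \<Rightarrow> ennreal) \<Rightarrow> 'a smeasure \<Rightarrow> nat set \<Rightarrow> nat set \<Rightarrow> (nat \<Rightarrow> 'a set)
    \<Rightarrow> (nat \<Rightarrow> real) \<Rightarrow> ('a \<Rightarrow> real) \<Rightarrow> ereal" where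
  "Ginf \<kappa> chi Ip In A a g = (INF \<mu>\<in>admissible \<kappa> Ip In A a g. Gchi \<kappa> chi Ip In \<mu>)"

definition weight_ok ::
  "('a::t2_space \<Rightarrow> 'a \<Rightarrow> ennreal) \<Rightarrow> nat set \<Rightarrow> (nat \<Rightarrow> 'a set) \<Rightarrow> ('a \<Rightarrow> real) \<Rightarrow> bool" where
  "weight_ok \<kappa> I A g \<longleftrightarrow> continuous_on (\<Union>i\<in>I. A i) g \<and>
     (\<exists>c>0. \<forall>x\<in>(\<Union>i\<in>I. A i). c \<le> g x) \<and>
     (\<forall>i\<in>I. bdd_above (g ` A i) \<or>
        (\<exists>r>1. \<exists>\<nu>. energy_space \<kappa> \<nu> \<and>
           nearly_everywhere \<kappa> (A i) (\<lambda>x. ereal (g x powr r) \<le> pot \<kappa> x \<nu>)))"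

definition compact_subsets_filter :: "'a::topological_space set \<Rightarrow> 'a set filter" where
  "compact_subsets_filter S =
     (INF K\<in>{K. compact K \<and> K \<subseteq> S}. principal {K'. compact K' \<and> K \<subseteq> K' \<and> K' \<subseteq> S})"

end

theory Submission
  imports Defs
begin

text \<open>
  Restricting the \<open>l\<close>-th plate only shrinks the class of admissible measures, so the
  restricted infima are at least \<open>G\<^sub>\<chi>(A, a, g)\<close>. Conversely, let \<open>\<mu>\<close> be admissible with
  \<open>G\<^sub>\<chi>(\<mu>) < y\<close>. As \<open>g\<close> is bounded below by a positive constant, \<open>\<mu>\<^sup>l\<close> is a finite Radon
  measure, so up to arbitrarily small mass it is carried by an increasing sequence of compact
  sets \<open>K\<^sub>n \<subseteq> A\<^sub>l\<close>. For a compact \<open>K \<supseteq> K\<^sub>n\<close> replace \<open>\<mu>\<^sup>l\<close> by \<open>c\<close> times its restriction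
  to \<open>K\<close>, where \<open>c = a\<^sub>l / \<integral>\<^sub>K g d\<mu>\<^sup>l\<close> restores the normalisation. Then \<open>1 \<le> c \<le> c\<^sub>n\<close> with
  \<open>c\<^sub>n \<longrightarrow> 1\<close>, and the new component lies between the restriction of \<open>\<mu>\<^sup>l\<close> to \<open>K\<^sub>n\<close> and
  \<open>c\<^sub>n \<mu>\<^sup>l\<close>. So each of the eight mutual energies making up \<open>G\<^sub>\<chi>\<close> is bounded, in the
  direction in which it enters \<open>G\<^sub>\<chi>\<close>, by a quantity depending only on \<open>n\<close>; these bounds
  converge to the energies of \<open>\<mu>\<close>, hence \<open>G\<^sub>\<chi>(A\<^sub>K, a, g) < y\<close> for all large \<open>K\<close>.
  Of the hypotheses only the lower semicontinuity of \<open>\<kappa>\<close>, the conditions on the condenser,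
  on \<open>\<chi>\<close> and on \<open>g\<close>, \<open>a\<^sub>i > 0\<close> and \<open>l \<in> I\<^sup>-\<close> are needed.
\<close>

section \<open>Countable sums of measures\<close>

lemma summeas_sets[simp]: "sets (summeas \<mu> J) = sets borel"
  unfolding summeas_def
  by (subst sets_measure_of) (auto simp: sets.sigma_sets_eq[of borel, simplified])

lemma ennreal_suminf_swap:
  fixes f :: "nat \<Rightarrow> nat \<Rightarrow> ennreal"
  shows "(\<Sum>n. \<Sum>i. f n i) = (\<Sum>i. \<Sum>n. f n i)"
proof -
  have "(\<Sum>n. \<Sum>i. f n i) = (\<integral>\<^sup>+n. (\<Sum>i. f n i) \<partial>count_space UNIV)"
    by (simp add: nn_integral_count_space_nat)
  also have "\<dots> = (\<Sum>i. \<integral>\<^sup>+n. f n i \<partial>count_space UNIV)"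
    by (rule nn_integral_suminf) auto
  also have "\<dots> = (\<Sum>i. \<Sum>n. f n i)"
    by (simp add: nn_integral_count_space_nat)
  finally show ?thesis .
qed

lemma summeas_emeasure:
  assumes "\<And>i. i \<in> J \<Longrightarrow> sets (\<mu> i) = sets borel" and "B \<in> sets borel"
  shows "emeasure (summeas \<mu> J) B = (\<Sum>i. if i \<in> J then emeasure (\<mu> i) B else 0)"
  unfolding summeas_def
proof (rule emeasure_measure_of_sigma)
  show "sigma_algebra UNIV (sets borel)"
    by (metis sets.sigma_algebra_axioms space_borel)
  show "positive (sets borel) (\<lambda>B. \<Sum>i. if i \<in> J then emeasure (\<mu> i) B else 0)"
  proof -
    have "\<And>i. (if i\<in>J then emeasure (\<mu> i) {} else 0) = (0::ennreal)" by simp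
    then show ?thesis unfolding positive_def by simp
  qed
  show "countably_additive (sets borel) (\<lambda>B. \<Sum>i. if i \<in> J then emeasure (\<mu> i) B else 0)"
  proof (clarsimp simp: countably_additive_def)
    fix A :: "nat \<Rightarrow> 'a set"
    assume A: "range A \<subseteq> sets borel" "disjoint_family A"
    have "(\<Sum>n. \<Sum>i. if i \<in> J then emeasure (\<mu> i) (A n) else 0)
        = (\<Sum>i. \<Sum>n. if i \<in> J then emeasure (\<mu> i) (A n) else 0)"
      by (rule ennreal_suminf_swap)
    also have "\<dots> = (\<Sum>i. if i \<in> J then emeasure (\<mu> i) (\<Union>n. A n) else 0)"
    proof (rule suminf_cong)
      fix i show "(\<Sum>n. if i \<in> J then emeasure (\<mu> i) (A n) else 0) = (if i \<in> J then emeasure (\<mu> i) (\<Union>n. A n) else 0)"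
        using A assms(1)[of i] by (auto intro: suminf_emeasure)
    qed
    finally show "(\<Sum>n. \<Sum>i. if i \<in> J then emeasure (\<mu> i) (A n) else 0) =
         (\<Sum>i. if i \<in> J then emeasure (\<mu> i) (\<Union>n. A n) else 0)" .
  qed
qed (use assms in auto)

lemma summeas_cong: "(\<And>i. i \<in> J \<Longrightarrow> \<mu> i = \<nu> i) \<Longrightarrow> summeas \<mu> J = summeas \<nu> J"
  unfolding summeas_def
  by (intro arg_cong[where f = "measure_of UNIV (sets borel)"] ext suminf_cong) auto

lemma summeas_emeasure_le_cmult:
  assumes sets: "\<And>i. i \<in> J \<Longrightarrow> sets (\<mu> i) = sets borel" "\<And>i. i \<in> J \<Longrightarrow> sets (\<nu> i) = sets borel"
    and le: "\<And>i. i \<in> J \<Longrightarrow> emeasure (\<mu> i) B \<le> c * emeasure (\<nu> i) B"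
    and B: "B \<in> sets borel"
  shows "emeasure (summeas \<mu> J) B \<le> c * emeasure (summeas \<nu> J) B"
proof -
  have "(\<Sum>i. if i \<in> J then emeasure (\<mu> i) B else 0) \<le> (\<Sum>i. c * (if i \<in> J then emeasure (\<nu> i) B else 0))"
    using le by (intro suminf_le summableI) auto
  then show ?thesis
    by (simp add: summeas_emeasure[OF sets(1) B] summeas_emeasure[OF sets(2) B])
qed

lemma summeas_emeasure_mono:
  assumes "\<And>i. i \<in> J \<Longrightarrow> sets (\<mu> i) = sets borel" "\<And>i. i \<in> J \<Longrightarrow> sets (\<nu> i) = sets borel"
    and "\<And>i. i \<in> J \<Longrightarrow> emeasure (\<mu> i) B \<le> emeasure (\<nu> i) B" and "B \<in> sets borel"
  shows "emeasure (summeas \<mu> J) B \<le> emeasure (summeas \<nu> J) B"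
  using summeas_emeasure_le_cmult[of J \<mu> \<nu> B 1] assms by simp

lemma summeas_SUP:
  assumes sets: "\<And>n i. i \<in> J \<Longrightarrow> sets (M n i) = sets borel" "\<And>i. i \<in> J \<Longrightarrow> sets (\<mu> i) = sets borel"
    and inc: "\<And>i. i \<in> J \<Longrightarrow> incseq (\<lambda>n. emeasure (M n i) B)"
    and sup: "\<And>i. i \<in> J \<Longrightarrow> (SUP n. emeasure (M n i) B) = emeasure (\<mu> i) B"
    and B: "B \<in> sets borel"
  shows "(SUP n. emeasure (summeas (M n) J) B) = emeasure (summeas \<mu> J) B"
proof -
  have "(SUP n. emeasure (summeas (M n) J) B) = (SUP n. \<Sum>i. if i \<in> J then emeasure (M n i) B else 0)"
    by (simp add: summeas_emeasure[OF sets(1) B])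
  also have "\<dots> = (\<Sum>i. SUP n. if i \<in> J then emeasure (M n i) B else 0)"
    using inc by (intro ennreal_suminf_SUP_eq[symmetric]) (auto simp: incseq_def)
  also have "\<dots> = (\<Sum>i. if i \<in> J then emeasure (\<mu> i) B else 0)"
    by (intro suminf_cong) (auto simp: sup)
  also have "\<dots> = emeasure (summeas \<mu> J) B"
    by (simp add: summeas_emeasure[OF sets(2) B])
  finally show ?thesis .
qed

lemma nn_integral_mono_measure_cmult:
  assumes sets: "sets M1 = sets M2"
    and le: "\<And>B. B \<in> sets M2 \<Longrightarrow> emeasure M1 B \<le> c * emeasure M2 B"
  shows "integral\<^sup>N M1 f \<le> c * integral\<^sup>N M2 f"
proof -
  have sp: "space M1 = space M2" using sets by (rule sets_eq_imp_space_eq)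
  show ?thesis
    unfolding nn_integral_def
  proof (rule SUP_least, clarify)
    fix g assume g: "simple_function M1 g" "g \<le> f"
    then have g2: "simple_function M2 g"
      using simple_function_cong_algebra[OF sets sp, of g] by blast
    have "integral\<^sup>S M1 g = (\<Sum>x \<in> g ` space M2. x * emeasure M1 (g -` {x} \<inter> space M2))"
      unfolding simple_integral_def sp ..
    also have "\<dots> \<le> (\<Sum>x \<in> g ` space M2. x * (c * emeasure M2 (g -` {x} \<inter> space M2)))"
      using g2 by (intro sum_mono mult_left_mono le) (auto simp: simple_function_def)
    also have "\<dots> = c * integral\<^sup>S M2 g"
      unfolding simple_integral_def sum_distrib_left by (simp add: ac_simps)
    also have "\<dots> \<le> c * (SUP g \<in> {g. simple_function M2 g \<and> g \<le> f}. integral\<^sup>S M2 g)"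
      using g2 g by (intro mult_left_mono SUP_upper) auto
    finally show "integral\<^sup>S M1 g \<le> c * (SUP g \<in> {g. simple_function M2 g \<and> g \<le> f}. integral\<^sup>S M2 g)" .
  qed
qed

lemma nn_integral_mono_measure:
  assumes "sets M1 = sets M2" "\<And>B. B \<in> sets M2 \<Longrightarrow> emeasure M1 B \<le> emeasure M2 B"
  shows "integral\<^sup>N M1 f \<le> integral\<^sup>N M2 f"
  using nn_integral_mono_measure_cmult[of M1 M2 1 f] assms by simp

lemma nn_integral_SUP_measure:
  assumes sets: "\<And>n. sets (M n) = sets N"
    and inc: "\<And>B. B \<in> sets N \<Longrightarrow> incseq (\<lambda>n. emeasure (M n) B)"
    and sup: "\<And>B. B \<in> sets N \<Longrightarrow> (SUP n. emeasure (M n) B) = emeasure N B"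
  shows "(SUP n. integral\<^sup>N (M n) f) = integral\<^sup>N N f"
proof -
  have sp: "\<And>n. space (M n) = space N" using sets by (rule sets_eq_imp_space_eq)
  have sf: "\<And>n g. simple_function (M n) g = simple_function N g"
    using simple_function_cong_algebra[OF sets sp] by blast
  have si: "(SUP n. integral\<^sup>S (M n) g) = integral\<^sup>S N g" if g: "simple_function N g" for g
  proof -
    have fin: "finite (g ` space N)" using g by (simp add: simple_function_def)
    have meas: "\<And>x. g -` {x} \<inter> space N \<in> sets N" using g by (simp add: simple_functionD)
    have "(SUP n. integral\<^sup>S (M n) g) = (SUP n. \<Sum>x \<in> g ` space N. x * emeasure (M n) (g -` {x} \<inter> space N))"
      unfolding simple_integral_def sp ..
    also have "\<dots> = (\<Sum>x \<in> g ` space N. SUP n. x * emeasure (M n) (g -` {x} \<inter> space N))"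
      by (rule ennreal_SUP_sum) (auto simp: incseq_def intro!: mult_left_mono incseqD[OF inc[OF meas]])
    also have "\<dots> = (\<Sum>x \<in> g ` space N. x * emeasure N (g -` {x} \<inter> space N))"
      by (intro sum.cong refl) (simp add: SUP_mult_left_ennreal[symmetric] sup[OF meas])
    finally show ?thesis unfolding simple_integral_def .
  qed
  have "(SUP n. integral\<^sup>N (M n) f) = (SUP n. SUP g \<in> {g. simple_function N g \<and> g \<le> f}. integral\<^sup>S (M n) g)"
    unfolding nn_integral_def sf ..
  also have "\<dots> = (SUP g \<in> {g. simple_function N g \<and> g \<le> f}. SUP n. integral\<^sup>S (M n) g)"
    by (rule SUP_commute)
  also have "\<dots> = integral\<^sup>N N f"
    unfolding nn_integral_def by (intro SUP_cong refl) (simp add: si)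
  finally show ?thesis .
qed

section \<open>Measurability of potentials\<close>

text \<open>
  The product \<open>\<sigma>\<close>-algebra need not contain the Borel sets of \<open>X \<times> X\<close>, so measurability of
  \<open>x \<mapsto> \<integral> \<kappa>(x, y) d\<nu>(y)\<close> is obtained from step approximations of \<open>\<kappa>\<close>: their potentials are finite
  combinations of \<open>x \<mapsto> \<nu>{y. s < \<kappa>(x, y)}\<close>, which is lower semicontinuous by the tube lemma
  and inner regularity of \<open>\<nu>\<close>.
\<close>

definition count_below :: "nat \<Rightarrow> real \<Rightarrow> real" where
  "count_below N m = (\<Sum>k\<in>{1..N}. if real k < m then 1 else 0)"

lemma count_below_bounds: "0 \<le> m \<Longrightarrow> count_below N m \<le> m \<and> count_below N m \<le> real N \<and> min (real N) (m - 1) \<le> count_below N m"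
proof (induction N)
  case 0 then show ?case by (simp add: count_below_def)
next
  case (Suc N)
  have eq: "count_below (Suc N) m = count_below N m + (if real (Suc N) < m then 1 else 0)"
    unfolding count_below_def by (simp add: add.commute)
  show ?case using Suc unfolding eq by (auto split: if_splits)
qed

definition staircase :: "nat \<Rightarrow> ennreal \<Rightarrow> ennreal" where
  "staircase n z = (\<Sum>k\<in>{1..n*n}. ennreal (1 / real n) * indicator {w. ennreal (real k / real n) < w} z)"

lemma staircase_ennreal:
  assumes "0 \<le> r" "0 < n"
  shows "staircase n (ennreal r) = ennreal (count_below (n*n) (real n * r) / real n)"
proof -
  have "staircase n (ennreal r) = (\<Sum>k\<in>{1..n*n}. ennreal (1 / real n * (if real k < real n * r then 1 else 0)))"
    unfolding staircase_def
  proof (intro sum.cong refl)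
    fix k
    have "(real k / real n < r) = (real k < real n * r)"
      using assms by (simp add: divide_less_eq mult.commute)
    then show "ennreal (1 / real n) * indicator {w. ennreal (real k / real n) < w} (ennreal r) =
          ennreal (1 / real n * (if real k < real n * r then 1 else 0))"
      using assms by (auto simp: indicator_def ennreal_less_iff)
  qed
  also have "\<dots> = ennreal (\<Sum>k\<in>{1..n*n}. 1 / real n * (if real k < real n * r then 1 else 0))"
    by (rule sum_ennreal) auto
  also have "\<dots> = ennreal (count_below (n*n) (real n * r) / real n)"
    unfolding count_below_def sum_distrib_left[symmetric] by simp
  finally show ?thesis .
qed

lemma staircase_top: "0 < n \<Longrightarrow> staircase n top = of_nat n"
proof -
  assume n: "0 < n"
  have "staircase n top = (\<Sum>k\<in>{1..n*n}. ennreal (1 / real n))"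
    unfolding staircase_def by (intro sum.cong refl) (simp add: indicator_def)
  also have "\<dots> = ennreal (real (n*n) * (1 / real n))"
    by (simp add: ennreal_of_nat_eq_real_of_nat ennreal_mult[symmetric])
  also have "\<dots> = of_nat n" using n by (simp add: ennreal_of_nat_eq_real_of_nat)
  finally show ?thesis .
qed

lemma staircase_le: "staircase n z \<le> z"
proof (cases "n = 0")
  case True then show ?thesis by (simp add: staircase_def)
next
  case False
  show ?thesis
  proof (cases z)
    case (real r)
    have "count_below (n*n) (real n * r) \<le> real n * r" using count_below_bounds[of "real n * r"] real by simp
    then have "count_below (n*n) (real n * r) / real n \<le> r" using False by (simp add: divide_le_eq mult.commute)
    then show ?thesis using real False staircase_ennreal[of r n] by (simp add: ennreal_leI)
  next
    case top then show ?thesis by simp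
  qed
qed

lemma staircase_ge:
  assumes "0 \<le> r" "0 < n"
  shows "ennreal (min (real n) (r - 1 / real n)) \<le> staircase n (ennreal r)"
proof -
  have "min (real (n*n)) (real n * r - 1) \<le> count_below (n*n) (real n * r)"
    using count_below_bounds[of "real n * r" "n*n"] assms by simp
  then have "min (real (n*n)) (real n * r - 1) / real n \<le> count_below (n*n) (real n * r) / real n"
    using assms by (simp add: divide_right_mono)
  moreover have "min (real (n*n)) (real n * r - 1) / real n = min (real n) (r - 1 / real n)"
    using assms by (simp add: min_divide_distrib_right field_simps)
  ultimately show ?thesis using assms staircase_ennreal[of r n] by (simp add: ennreal_leI)
qed

lemma staircase_liminf: "z \<le> liminf (\<lambda>n. staircase n z)"
proof (unfold le_Liminf_iff, intro allI impI)
  fix y assume y: "y < z"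
  then obtain y' where y': "y = ennreal y'" "0 \<le> y'" by (cases y) (auto simp: top_unique)
  show "\<forall>\<^sub>F n in sequentially. y < staircase n z"
  proof (cases z)
    case top
    obtain N :: nat where "y' < real N" using reals_Archimedean2 by blast
    then have "y < staircase n z" if "N < n" for n
      using that top y' by (simp add: staircase_top ennreal_of_nat_eq_real_of_nat ennreal_less_iff)
    then show ?thesis unfolding eventually_sequentially by (meson Suc_le_lessD)
  next
    case (real r)
    then have r: "y' < r" "0 \<le> r" using y y' by (auto simp: ennreal_less_iff)
    obtain N :: nat where N: "max y' (1 / (r - y')) < real N" using reals_Archimedean2 by blast
    have "y < staircase n z" if "N \<le> n" for n
    proof -
      have n: "y' < real n" "1 / (r - y') < real n" using N that by auto
      then have "0 < real n" "1 / real n < r - y'"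
        using r y' by (auto simp: field_simps)
      then have "ennreal y' < ennreal (min (real n) (r - 1 / real n))"
        using n y' by (simp add: ennreal_less_iff)
      also have "\<dots> \<le> staircase n z"
        using staircase_ge[of r n] real r \<open>0 < real n\<close> by simp
      finally show ?thesis using y' by simp
    qed
    then show ?thesis unfolding eventually_sequentially by blast
  qed
qed

definition open_inner_regular :: "'a::topological_space measure \<Rightarrow> bool" where
  "open_inner_regular \<nu> \<longleftrightarrow> (\<forall>U. open U \<longrightarrow> emeasure \<nu> U = (SUP K\<in>{K. compact K \<and> K \<subseteq> U}. emeasure \<nu> K))"

lemma lsc_section_open:
  fixes \<kappa> :: "'a::topological_space \<Rightarrow> 'a \<Rightarrow> ennreal"
  assumes lsc: "\<forall>t. open {p :: 'a \<times> 'a. t < \<kappa> (fst p) (snd p)}"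
  shows "open {y. s < \<kappa> x y}"
proof -
  have "{y. s < \<kappa> x y} = (\<lambda>y. (x, y)) -` {p. s < \<kappa> (fst p) (snd p)}" by auto
  moreover have "continuous_on UNIV (\<lambda>y::'a. (x, y))" by (intro continuous_intros)
  ultimately show ?thesis using open_vimage[OF lsc[rule_format, of s], of "\<lambda>y. (x, y)"] by simp
qed

lemma open_superlevel_measure:
  fixes \<kappa> :: "'a::t2_space \<Rightarrow> 'a \<Rightarrow> ennreal"
  assumes lsc: "\<forall>t. open {p :: 'a \<times> 'a. t < \<kappa> (fst p) (snd p)}"
    and sets: "sets \<nu> = sets borel" and ireg: "open_inner_regular \<nu>"
  shows "open {x. t < emeasure \<nu> {y. s < \<kappa> x y}}"
proof (rule Topological_Spaces.openI)
  fix x0 assume "x0 \<in> {x. t < emeasure \<nu> {y. s < \<kappa> x y}}"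
  then have t: "t < emeasure \<nu> {y. s < \<kappa> x0 y}" by simp
  have op: "\<And>x. open {y. s < \<kappa> x y}" by (rule lsc_section_open[OF lsc])
  then have "emeasure \<nu> {y. s < \<kappa> x0 y} = (SUP K\<in>{K. compact K \<and> K \<subseteq> {y. s < \<kappa> x0 y}}. emeasure \<nu> K)"
    using ireg unfolding open_inner_regular_def by blast
  with t obtain K where K: "compact K" "K \<subseteq> {y. s < \<kappa> x0 y}" "t < emeasure \<nu> K"
    by (auto simp: less_SUP_iff)
  have "{x0} \<times> K \<subseteq> {p. s < \<kappa> (fst p) (snd p)}" using K by auto
  moreover have W: "open {p. s < \<kappa> (fst p) (snd p)}" using lsc by blast
  ultimately obtain X0 where X0: "x0 \<in> X0" "open X0" "X0 \<times> K \<subseteq> {p. s < \<kappa> (fst p) (snd p)}"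
    using Elementary_Topology.tube_lemma[OF K(1) W] by blast
  show "\<exists>T. open T \<and> x0 \<in> T \<and> T \<subseteq> {x. t < emeasure \<nu> {y. s < \<kappa> x y}}"
  proof (intro exI[of _ X0] conjI)
    show "X0 \<subseteq> {x. t < emeasure \<nu> {y. s < \<kappa> x y}}"
    proof
      fix x assume x: "x \<in> X0"
      then have "K \<subseteq> {y. s < \<kappa> x y}" using X0(3) by auto
      moreover have "{y. s < \<kappa> x y} \<in> sets \<nu>"
        unfolding sets by (rule borel_open[OF op])
      ultimately have "emeasure \<nu> K \<le> emeasure \<nu> {y. s < \<kappa> x y}"
        by (rule emeasure_mono)
      then show "x \<in> {x. t < emeasure \<nu> {y. s < \<kappa> x y}}" using K(3) by auto
    qed
  qed (use X0 in auto)
qed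

lemma borel_measurable_superlevel_measure:
  fixes \<kappa> :: "'a::t2_space \<Rightarrow> 'a \<Rightarrow> ennreal"
  assumes lsc: "\<forall>t. open {p :: 'a \<times> 'a. t < \<kappa> (fst p) (snd p)}"
    and sets: "sets \<nu> = sets borel" and ireg: "open_inner_regular \<nu>"
  shows "(\<lambda>x. emeasure \<nu> {y. s < \<kappa> x y}) \<in> borel_measurable borel"
  by (rule borel_measurableI_greater) (simp add: borel_open open_superlevel_measure[OF assms])

lemma nn_integral_staircase:
  assumes levels: "\<And>s. {y. s < f y} \<in> sets \<nu>"
  shows "(\<integral>\<^sup>+y. staircase n (f y) \<partial>\<nu>) =
      (\<Sum>k\<in>{1..n*n}. ennreal (1 / real n) * emeasure \<nu> {y. ennreal (real k / real n) < f y})"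
proof -
  have "(\<integral>\<^sup>+y. staircase n (f y) \<partial>\<nu>) =
      (\<integral>\<^sup>+y. (\<Sum>k\<in>{1..n*n}. ennreal (1 / real n) * indicator {y. ennreal (real k / real n) < f y} y) \<partial>\<nu>)"
    unfolding staircase_def by (intro nn_integral_cong sum.cong refl) (simp add: indicator_def)
  also have "\<dots> = (\<Sum>k\<in>{1..n*n}. ennreal (1 / real n) * emeasure \<nu> {y. ennreal (real k / real n) < f y})"
    using levels by (subst nn_integral_sum) (auto intro!: sum.cong nn_integral_cmult_indicator)
  finally show ?thesis .
qed

lemma nn_integral_eq_SUP_staircase:
  assumes levels: "\<And>s. {y. s < f y} \<in> sets \<nu>"
  shows "(\<integral>\<^sup>+y. f y \<partial>\<nu>) = (SUP n. \<integral>\<^sup>+y. staircase n (f y) \<partial>\<nu>)"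
proof (rule antisym)
  have meas: "(\<lambda>y. staircase n (f y)) \<in> borel_measurable \<nu>" for n
  proof -
    have "(\<lambda>y. staircase n (f y)) =
        (\<lambda>y. \<Sum>k\<in>{1..n*n}. ennreal (1 / real n) * indicator {y. ennreal (real k / real n) < f y} y)"
      unfolding staircase_def by (intro ext sum.cong refl) (simp add: indicator_def)
    then show ?thesis
      by (simp only:) (intro borel_measurable_sum borel_measurable_times_ennreal borel_measurable_const
          borel_measurable_indicator levels)
  qed
  have "(\<integral>\<^sup>+y. f y \<partial>\<nu>) \<le> (\<integral>\<^sup>+y. liminf (\<lambda>n. staircase n (f y)) \<partial>\<nu>)"
    by (intro nn_integral_mono staircase_liminf)
  also have "\<dots> \<le> liminf (\<lambda>n. \<integral>\<^sup>+y. staircase n (f y) \<partial>\<nu>)"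
    by (rule nn_integral_liminf[OF meas])
  also have "\<dots> \<le> (SUP n. \<integral>\<^sup>+y. staircase n (f y) \<partial>\<nu>)"
    unfolding liminf_SUP_INF by (intro SUP_mono) (auto intro: INF_lower)
  finally show "(\<integral>\<^sup>+y. f y \<partial>\<nu>) \<le> (SUP n. \<integral>\<^sup>+y. staircase n (f y) \<partial>\<nu>)" .
  show "(SUP n. \<integral>\<^sup>+y. staircase n (f y) \<partial>\<nu>) \<le> (\<integral>\<^sup>+y. f y \<partial>\<nu>)"
    by (intro SUP_least nn_integral_mono staircase_le)
qed

lemma borel_measurable_potential:
  fixes \<kappa> :: "'a::t2_space \<Rightarrow> 'a \<Rightarrow> ennreal"
  assumes lsc: "\<forall>t. open {p :: 'a \<times> 'a. t < \<kappa> (fst p) (snd p)}"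
    and sets: "sets \<nu> = sets borel" and ireg: "open_inner_regular \<nu>" and M: "sets M = sets borel"
  shows "(\<lambda>x. \<integral>\<^sup>+y. \<kappa> x y \<partial>\<nu>) \<in> borel_measurable M"
proof -
  have levels: "\<And>x s. {y. s < \<kappa> x y} \<in> sets \<nu>"
    using sets borel_open[OF lsc_section_open[OF lsc]] by simp
  have "(\<lambda>x. SUP n. \<integral>\<^sup>+y. staircase n (\<kappa> x y) \<partial>\<nu>) \<in> borel_measurable borel"
    unfolding nn_integral_staircase[OF levels]
    by (intro borel_measurable_SUP borel_measurable_sum borel_measurable_times_ennreal
        borel_measurable_const borel_measurable_superlevel_measure[OF lsc sets ireg]) simp
  then show ?thesis
    unfolding nn_integral_eq_SUP_staircase[OF levels, symmetric] using M measurable_cong_sets by blast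
qed

lemma radon_imp_open_inner_regular: "radon \<mu> \<Longrightarrow> open_inner_regular \<mu>"
  unfolding radon_def open_inner_regular_def by blast

lemma open_inner_regular_summeas:
  fixes \<mu> :: "nat \<Rightarrow> 'a::t2_space measure"
  assumes rad: "\<And>i. i \<in> J \<Longrightarrow> radon (\<mu> i)"
  shows "open_inner_regular (summeas \<mu> J)"
  unfolding open_inner_regular_def
proof (intro allI impI)
  fix U :: "'a set" assume U: "open U"
  have sets: "\<And>i. i \<in> J \<Longrightarrow> sets (\<mu> i) = sets borel" using rad by (simp add: radon_def)
  let ?I = "{K. compact K \<and> K \<subseteq> U}"
  have "emeasure (summeas \<mu> J) U = (\<Sum>i. if i \<in> J then emeasure (\<mu> i) U else 0)"
    using U by (intro summeas_emeasure sets) auto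
  also have "\<dots> = (\<Sum>i. SUP K\<in>?I. if i \<in> J then emeasure (\<mu> i) K else 0)"
  proof (intro suminf_cong)
    fix i
    have ne: "?I \<noteq> {}" by (metis (mono_tags, lifting) compact_empty empty_iff empty_subsetI mem_Collect_eq)
    show "(if i \<in> J then emeasure (\<mu> i) U else 0) = (SUP K\<in>?I. if i \<in> J then emeasure (\<mu> i) K else 0)"
      using rad[of i] U ne by (auto simp: radon_def)
  qed
  also have "\<dots> = (SUP K\<in>?I. \<Sum>i. if i \<in> J then emeasure (\<mu> i) K else 0)"
  proof (rule ennreal_suminf_SUP_eq_directed)
    fix N :: "nat set" and K1 K2 assume K: "K1 \<in> ?I" "K2 \<in> ?I" "finite N"
    show "\<exists>k\<in>?I. \<forall>n\<in>N. (if n \<in> J then emeasure (\<mu> n) K1 else 0) \<le> (if n \<in> J then emeasure (\<mu> n) k else 0) \<and>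
                      (if n \<in> J then emeasure (\<mu> n) K2 else 0) \<le> (if n \<in> J then emeasure (\<mu> n) k else 0)"
    proof (intro bexI[of _ "K1 \<union> K2"] ballI conjI)
      fix n assume "n \<in> N"
      have m: "K1 \<union> K2 \<in> sets borel" using K by (intro borel_compact compact_Un) auto
      show "(if n \<in> J then emeasure (\<mu> n) K1 else 0) \<le> (if n \<in> J then emeasure (\<mu> n) (K1 \<union> K2) else 0)"
        using m sets[of n] by (auto intro!: emeasure_mono)
      show "(if n \<in> J then emeasure (\<mu> n) K2 else 0) \<le> (if n \<in> J then emeasure (\<mu> n) (K1 \<union> K2) else 0)"
        using m sets[of n] by (auto intro!: emeasure_mono)
    qed (use K in auto)
  qed
  also have "\<dots> = (SUP K\<in>?I. emeasure (summeas \<mu> J) K)"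
    by (intro SUP_cong refl summeas_emeasure[symmetric] sets borel_compact) auto
  finally show "emeasure (summeas \<mu> J) U = (SUP K\<in>?I. emeasure (summeas \<mu> J) K)" .
qed

lemma en_mono_cmult:
  fixes \<kappa> :: "'a::t2_space \<Rightarrow> 'a \<Rightarrow> ennreal"
  assumes lsc: "\<forall>t. open {p :: 'a \<times> 'a. t < \<kappa> (fst p) (snd p)}"
    and s: "sets \<mu>1 = sets borel" "sets \<mu> = sets borel" "sets \<nu>1 = sets borel" "sets \<nu> = sets borel"
    and ir: "open_inner_regular \<nu>"
    and le1: "\<And>B. B \<in> sets borel \<Longrightarrow> emeasure \<mu>1 B \<le> c1 * emeasure \<mu> B"
    and le2: "\<And>B. B \<in> sets borel \<Longrightarrow> emeasure \<nu>1 B \<le> c2 * emeasure \<nu> B"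
  shows "en \<kappa> \<mu>1 \<nu>1 \<le> c1 * (c2 * en \<kappa> \<mu> \<nu>)"
proof -
  have "en \<kappa> \<mu>1 \<nu>1 \<le> (\<integral>\<^sup>+ x. c2 * (\<integral>\<^sup>+ y. \<kappa> x y \<partial>\<nu>) \<partial>\<mu>1)"
    unfolding en_def
    by (intro nn_integral_mono nn_integral_mono_measure_cmult) (use s le2 in auto)
  also have "\<dots> \<le> c1 * (\<integral>\<^sup>+ x. c2 * (\<integral>\<^sup>+ y. \<kappa> x y \<partial>\<nu>) \<partial>\<mu>)"
    by (rule nn_integral_mono_measure_cmult) (use s le1 in auto)
  also have "\<dots> = c1 * (c2 * en \<kappa> \<mu> \<nu>)"
    unfolding en_def by (subst nn_integral_cmult) (use borel_measurable_potential[OF lsc s(4) ir s(2)] in auto)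
  finally show ?thesis .
qed

lemma en_mono:
  fixes \<kappa> :: "'a::t2_space \<Rightarrow> 'a \<Rightarrow> ennreal"
  assumes s: "sets \<mu>1 = sets borel" "sets \<mu> = sets borel" "sets \<nu>1 = sets borel" "sets \<nu> = sets borel"
    and le1: "\<And>B. B \<in> sets borel \<Longrightarrow> emeasure \<mu>1 B \<le> emeasure \<mu> B"
    and le2: "\<And>B. B \<in> sets borel \<Longrightarrow> emeasure \<nu>1 B \<le> emeasure \<nu> B"
  shows "en \<kappa> \<mu>1 \<nu>1 \<le> en \<kappa> \<mu> \<nu>"
proof -
  have "en \<kappa> \<mu>1 \<nu>1 \<le> (\<integral>\<^sup>+ x. (\<integral>\<^sup>+ y. \<kappa> x y \<partial>\<nu>) \<partial>\<mu>1)"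
    unfolding en_def
    by (intro nn_integral_mono nn_integral_mono_measure) (use s le2 in auto)
  also have "\<dots> \<le> en \<kappa> \<mu> \<nu>"
    unfolding en_def by (rule nn_integral_mono_measure) (use s le1 in auto)
  finally show ?thesis .
qed

lemma en_SUP_right:
  fixes \<kappa> :: "'a::t2_space \<Rightarrow> 'a \<Rightarrow> ennreal"
  assumes lsc: "\<forall>t. open {p :: 'a \<times> 'a. t < \<kappa> (fst p) (snd p)}"
    and sP: "sets P = sets borel" and sN: "sets N = sets borel"
    and sM: "\<And>n. sets (M n) = sets borel" and ir: "\<And>n. open_inner_regular (M n)"
    and inc: "\<And>B. B \<in> sets borel \<Longrightarrow> incseq (\<lambda>n. emeasure (M n) B)"
    and sup: "\<And>B. B \<in> sets borel \<Longrightarrow> (SUP n. emeasure (M n) B) = emeasure N B"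
  shows "(SUP n. en \<kappa> P (M n)) = en \<kappa> P N"
proof -
  have incf: "incseq (\<lambda>n x. \<integral>\<^sup>+ y. \<kappa> x y \<partial>M n)"
  proof (rule incseq_SucI, rule le_funI)
    fix n x show "(\<integral>\<^sup>+ y. \<kappa> x y \<partial>M n) \<le> (\<integral>\<^sup>+ y. \<kappa> x y \<partial>M (Suc n))"
      by (rule nn_integral_mono_measure) (use sM inc in \<open>auto simp: incseq_Suc_iff\<close>)
  qed
  have "(SUP n. en \<kappa> P (M n)) = (\<integral>\<^sup>+ x. (SUP n. \<integral>\<^sup>+ y. \<kappa> x y \<partial>M n) \<partial>P)"
    unfolding en_def
    by (rule nn_integral_monotone_convergence_SUP[symmetric, OF incf]) (rule borel_measurable_potential[OF lsc sM ir sP])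
  also have "\<dots> = en \<kappa> P N"
    unfolding en_def
    by (intro nn_integral_cong nn_integral_SUP_measure) (use sM sN inc sup in auto)
  finally show ?thesis .
qed

lemma en_SUP_left:
  fixes \<kappa> :: "'a::t2_space \<Rightarrow> 'a \<Rightarrow> ennreal"
  assumes sN: "sets N = sets borel"
    and sM: "\<And>n. sets (M n) = sets borel"
    and inc: "\<And>B. B \<in> sets borel \<Longrightarrow> incseq (\<lambda>n. emeasure (M n) B)"
    and sup: "\<And>B. B \<in> sets borel \<Longrightarrow> (SUP n. emeasure (M n) B) = emeasure N B"
  shows "(SUP n. en \<kappa> (M n) P) = en \<kappa> N P"
  unfolding en_def by (rule nn_integral_SUP_measure) (use sM sN inc sup in auto)

section \<open>Scaled restrictions and exhaustion by compact sets\<close>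

definition scaled_restriction :: "'a::topological_space measure \<Rightarrow> real \<Rightarrow> 'a set \<Rightarrow> 'a measure" where
  "scaled_restriction \<mu> c K = density \<mu> (\<lambda>x. ennreal c * indicator K x)"

lemma scaled_restriction_sets[simp]: "sets (scaled_restriction \<mu> c K) = sets \<mu>"
  unfolding scaled_restriction_def by simp

lemma scaled_restriction_emeasure:
  assumes "K \<in> sets \<mu>" "B \<in> sets \<mu>"
  shows "emeasure (scaled_restriction \<mu> c K) B = ennreal c * emeasure \<mu> (K \<inter> B)"
proof -
  have "emeasure (scaled_restriction \<mu> c K) B = (\<integral>\<^sup>+x. (ennreal c * indicator K x) * indicator B x \<partial>\<mu>)"
    unfolding scaled_restriction_def using assms by (intro emeasure_density) auto
  also have "\<dots> = (\<integral>\<^sup>+x. ennreal c * indicator (K \<inter> B) x \<partial>\<mu>)"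
    by (intro nn_integral_cong) (simp add: indicator_def)
  also have "\<dots> = ennreal c * emeasure \<mu> (K \<inter> B)"
    using assms by (intro nn_integral_cmult_indicator) auto
  finally show ?thesis .
qed

lemma scaled_restriction_one_emeasure:
  assumes "sets \<mu> = sets borel" "K \<in> sets borel" "B \<in> sets borel"
  shows "emeasure (scaled_restriction \<mu> 1 K) B = emeasure \<mu> (K \<inter> B)"
  using assms by (simp add: scaled_restriction_emeasure)

lemma radon_outer_approx:
  assumes rad: "radon \<mu>" and B: "B \<in> sets borel" "emeasure \<mu> B < \<infinity>" and e: "0 < e"
  shows "\<exists>V. open V \<and> B \<subseteq> V \<and> emeasure \<mu> V < emeasure \<mu> B + ennreal e"
proof -
  have "emeasure \<mu> B = (INF U\<in>{U. open U \<and> B \<subseteq> U}. emeasure \<mu> U)"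
    using rad B(1) unfolding radon_def by blast
  moreover have "emeasure \<mu> B < emeasure \<mu> B + ennreal e"
    using B(2) e by (cases "emeasure \<mu> B") (auto simp: ennreal_plus[symmetric] ennreal_less_iff simp del: ennreal_plus)
  ultimately show ?thesis by (metis (mono_tags, lifting) INF_less_iff mem_Collect_eq)
qed

lemma radon_Int_compact_inner_approx:
  fixes \<mu> :: "'a::t2_space measure"
  assumes rad: "radon \<mu>" and K: "compact K" and U: "open U" and e: "0 < e"
  shows "\<exists>C. compact C \<and> C \<subseteq> U \<and> emeasure \<mu> (K \<inter> U) \<le> emeasure \<mu> (K \<inter> C) + ennreal e"
proof -
  have sets: "sets \<mu> = sets borel" using rad by (simp add: radon_def)
  have KU: "K - U \<in> sets \<mu>" using K U sets by (simp add: borel_compact borel_open sets.Diff)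
  have "emeasure \<mu> K < \<infinity>" using rad K unfolding radon_def by blast
  then have fKU: "emeasure \<mu> (K - U) < \<infinity>"
    using K sets emeasure_mono[of "K - U" K \<mu>] by (auto simp: borel_compact)
  obtain V where V: "open V" "K - U \<subseteq> V" "emeasure \<mu> V < emeasure \<mu> (K - U) + ennreal e"
    using radon_outer_approx[OF rad _ fKU e] KU sets by auto
  have Vm: "V \<inter> (K \<inter> U) \<in> sets \<mu>"
    using V K U sets by (intro sets.Int) (auto simp: borel_open borel_compact)
  \<comment> \<open>\<open>V\<close> covers \<open>K - U\<close> with excess less than \<open>e\<close>, so the compact \<open>K - V \<subseteq> U\<close> misses little of \<open>K \<inter> U\<close>.\<close>
  have "emeasure \<mu> (K - U) + emeasure \<mu> (V \<inter> (K \<inter> U)) = emeasure \<mu> ((K - U) \<union> (V \<inter> (K \<inter> U)))"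
    using KU Vm by (intro plus_emeasure) auto
  also have "\<dots> \<le> emeasure \<mu> V" using V sets by (intro emeasure_mono) (auto simp: borel_open)
  also have "\<dots> < emeasure \<mu> (K - U) + ennreal e" by (rule V(3))
  finally have small: "emeasure \<mu> (V \<inter> (K \<inter> U)) < ennreal e"
    using fKU by (simp add: ennreal_add_left_cancel_less)
  have Cm: "K - V \<in> sets \<mu>" using K V sets by (intro sets.Diff) (auto simp: borel_open borel_compact)
  have "emeasure \<mu> (K \<inter> U) \<le> emeasure \<mu> ((K - V) \<union> (V \<inter> (K \<inter> U)))"
    using Cm Vm by (intro emeasure_mono) auto
  also have "\<dots> \<le> emeasure \<mu> (K - V) + emeasure \<mu> (V \<inter> (K \<inter> U))"
    using Cm Vm by (intro emeasure_subadditive)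
  also have "\<dots> \<le> emeasure \<mu> (K \<inter> (K - V)) + ennreal e"
    using small by (intro add_mono) (auto simp: Int_absorb1)
  finally show ?thesis
    using K V by (intro exI[of _ "K - V"]) (auto intro: compact_diff)
qed

lemma radon_Int_compact_outer_approx:
  fixes \<mu> :: "'a::t2_space measure"
  assumes rad: "radon \<mu>" and K: "compact K" and B: "B \<in> sets borel" and e: "0 < e"
  shows "\<exists>U. open U \<and> B \<subseteq> U \<and> emeasure \<mu> (K \<inter> U) \<le> emeasure \<mu> (K \<inter> B) + ennreal e"
proof -
  have sets: "sets \<mu> = sets borel" using rad by (simp add: radon_def)
  have KB: "K \<inter> B \<in> sets borel" using K B by (simp add: borel_compact sets.Int)
  have "emeasure \<mu> K < \<infinity>" using rad K unfolding radon_def by blast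
  then have "emeasure \<mu> (K \<inter> B) < \<infinity>"
    using K sets emeasure_mono[of "K \<inter> B" K \<mu>] by (auto simp: borel_compact)
  then obtain W where W: "open W" "K \<inter> B \<subseteq> W" "emeasure \<mu> W < emeasure \<mu> (K \<inter> B) + ennreal e"
    using radon_outer_approx[OF rad KB _ e] by auto
  have "emeasure \<mu> (K \<inter> (W \<union> - K)) \<le> emeasure \<mu> W"
    using W sets by (intro emeasure_mono) (auto simp: borel_open)
  with W K show ?thesis
    by (intro exI[of _ "W \<union> - K"]) (auto intro: open_Un compact_imp_closed)
qed

lemma radon_scaled_restriction:
  fixes \<mu> :: "'a::t2_space measure"
  assumes rad: "radon \<mu>" and K: "compact K" and c: "0 \<le> c"
  shows "radon (scaled_restriction \<mu> c K)"
proof -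
  have sets: "sets \<mu> = sets borel" using rad by (simp add: radon_def)
  have em: "\<And>B. B \<in> sets borel \<Longrightarrow> emeasure (scaled_restriction \<mu> c K) B = ennreal c * emeasure \<mu> (K \<inter> B)"
    using K sets by (intro scaled_restriction_emeasure) (auto simp: borel_compact)
  have scale: "ennreal c * (x + ennreal (e / c)) = ennreal c * x + ennreal e" if "0 < c" "0 < e" for x e
    using that by (simp add: distrib_left ennreal_mult[symmetric])
  show ?thesis
    unfolding radon_def
  proof (intro conjI allI impI ballI)
    show "sets (scaled_restriction \<mu> c K) = sets borel" using sets by simp
  next
    fix C :: "'a set" assume C: "compact C"
    have "emeasure \<mu> (K \<inter> C) \<le> emeasure \<mu> K" using K sets by (intro emeasure_mono) (auto simp: borel_compact)
    moreover have "emeasure \<mu> K < \<infinity>" using rad K unfolding radon_def by blast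
    ultimately show "emeasure (scaled_restriction \<mu> c K) C < \<infinity>"
      using em[OF borel_compact[OF C]] by (auto simp: ennreal_mult_less_top)
  next
    fix U :: "'a set" assume U: "open U"
    show "emeasure (scaled_restriction \<mu> c K) U = (SUP C\<in>{C. compact C \<and> C \<subseteq> U}. emeasure (scaled_restriction \<mu> c K) C)"
    proof (rule ennreal_approx_SUP)
      fix e :: real assume e: "0 < e"
      show "\<exists>C\<in>{C. compact C \<and> C \<subseteq> U}. emeasure (scaled_restriction \<mu> c K) U \<le> emeasure (scaled_restriction \<mu> c K) C + ennreal e"
      proof (cases "c = 0")
        case True then show ?thesis using U em by (intro bexI[of _ "{}"]) (auto simp: borel_open)
      next
        case False
        with c e obtain C where C: "compact C" "C \<subseteq> U"
          "emeasure \<mu> (K \<inter> U) \<le> emeasure \<mu> (K \<inter> C) + ennreal (e / c)"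
          using radon_Int_compact_inner_approx[OF rad K U, of "e / c"] by auto
        then have "ennreal c * emeasure \<mu> (K \<inter> U) \<le> ennreal c * emeasure \<mu> (K \<inter> C) + ennreal e"
          using scale[of e] False c e by (metis mult_left_mono order_le_less zero_le)
        then show ?thesis using C U em[of U] em[of C] by (intro bexI[of _ C]) (auto simp: borel_open borel_compact)
      qed
    qed (use U sets in \<open>auto intro: emeasure_mono simp: borel_open\<close>)
  next
    fix B :: "'a set" assume B: "B \<in> sets borel"
    show "emeasure (scaled_restriction \<mu> c K) B = (INF U\<in>{U. open U \<and> B \<subseteq> U}. emeasure (scaled_restriction \<mu> c K) U)"
    proof (rule ennreal_approx_INF)
      fix e :: real assume e: "0 < e"
      show "\<exists>U\<in>{U. open U \<and> B \<subseteq> U}. emeasure (scaled_restriction \<mu> c K) U \<le> emeasure (scaled_restriction \<mu> c K) B + ennreal e"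
      proof (cases "c = 0")
        case True then show ?thesis using B em by (intro bexI[of _ UNIV]) auto
      next
        case False
        with c e obtain U where U: "open U" "B \<subseteq> U"
          "emeasure \<mu> (K \<inter> U) \<le> emeasure \<mu> (K \<inter> B) + ennreal (e / c)"
          using radon_Int_compact_outer_approx[OF rad K B, of "e / c"] by auto
        then have "ennreal c * emeasure \<mu> (K \<inter> U) \<le> ennreal c * emeasure \<mu> (K \<inter> B) + ennreal e"
          using scale[of e] False c e by (metis mult_left_mono order_le_less zero_le)
        then show ?thesis using U B em[of U] em[OF B] by (intro bexI[of _ U]) (auto simp: borel_open)
      qed
    qed (use B sets in \<open>auto intro: emeasure_mono simp: borel_open\<close>)
  qed
qed

lemma scaled_restriction_le:
  fixes \<mu> :: "'a::t2_space measure"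
  assumes "sets \<mu> = sets borel" "K \<in> sets borel" "B \<in> sets borel" "1 \<le> c"
  shows "emeasure (scaled_restriction \<mu> c K) B \<le> ennreal c * emeasure \<mu> B"
  using assms by (simp add: scaled_restriction_emeasure mult_left_mono emeasure_mono)

lemma concentrated_scaled_restriction:
  fixes \<mu> :: "'a::t2_space measure"
  assumes "sets \<mu> = sets borel" "compact K"
  shows "concentrated (scaled_restriction \<mu> c K) K"
  unfolding concentrated_def
proof (intro bexI[of _ "- K"] conjI)
  show "- K \<in> sets borel" using assms by (simp add: borel_open open_Compl compact_imp_closed)
  then show "emeasure (scaled_restriction \<mu> c K) (- K) = 0"
    using assms by (subst scaled_restriction_emeasure) (auto simp: borel_compact)
qed simp

lemma nn_integral_scaled_restriction:
  assumes "f \<in> borel_measurable \<mu>" "K \<in> sets \<mu>"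
  shows "(\<integral>\<^sup>+x. f x \<partial>scaled_restriction \<mu> c K) = ennreal c * (\<integral>\<^sup>+x. f x * indicator K x \<partial>\<mu>)"
proof -
  have "(\<integral>\<^sup>+x. f x \<partial>scaled_restriction \<mu> c K) = (\<integral>\<^sup>+x. ennreal c * (f x * indicator K x) \<partial>\<mu>)"
    unfolding scaled_restriction_def using assms
    by (subst nn_integral_density) (auto intro!: nn_integral_cong simp: ac_simps)
  also have "\<dots> = ennreal c * (\<integral>\<^sup>+x. f x * indicator K x \<partial>\<mu>)"
    using assms by (intro nn_integral_cmult) auto
  finally show ?thesis .
qed

lemma scaled_restriction_SUP:
  assumes sets: "sets \<mu> = sets borel" and K: "\<And>n. K n \<in> sets borel" "incseq K"
    and exh: "\<And>B. B \<in> sets borel \<Longrightarrow> emeasure \<mu> B = (SUP n. emeasure \<mu> (K n \<inter> B))"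
    and B: "B \<in> sets borel"
  shows "incseq (\<lambda>n. emeasure (scaled_restriction \<mu> 1 (K n)) B)"
    and "(SUP n. emeasure (scaled_restriction \<mu> 1 (K n)) B) = emeasure \<mu> B"
proof -
  show "incseq (\<lambda>n. emeasure (scaled_restriction \<mu> 1 (K n)) B)"
    using K B sets by (auto simp: incseq_def scaled_restriction_one_emeasure intro!: emeasure_mono)
  show "(SUP n. emeasure (scaled_restriction \<mu> 1 (K n)) B) = emeasure \<mu> B"
    using K B sets exh by (simp add: scaled_restriction_one_emeasure)
qed

lemma ennreal_le_inverse_Suc_imp_zero:
  fixes x :: ennreal
  assumes "\<And>n. x \<le> ennreal (1 / Suc n)"
  shows "x = 0"
proof -
  have "x \<le> 0 + ennreal e" if e: "0 < e" for e :: real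
  proof -
    obtain n :: nat where n: "1 / e < real n" using reals_Archimedean2 by blast
    have "1 / real (Suc n) \<le> e"
      using e n by (simp add: divide_le_eq field_simps)
    then have "ennreal (1 / Suc n) \<le> ennreal e" by (rule ennreal_leI)
    then show ?thesis using assms[of n] by simp
  qed
  then have "x \<le> 0" by (rule ennreal_le_epsilon) auto
  then show ?thesis by simp
qed

lemma radon_finite_compact_approx:
  fixes \<mu> :: "'a::t2_space measure"
  assumes rad: "radon \<mu>" and fin: "emeasure \<mu> UNIV < \<infinity>" and e: "0 < e"
  shows "\<exists>C. compact C \<and> emeasure \<mu> (- C) \<le> ennreal e"
proof -
  have sets: "sets \<mu> = sets borel" using rad by (simp add: radon_def)
  have sup: "emeasure \<mu> UNIV = (SUP K\<in>{K. compact K \<and> K \<subseteq> UNIV}. emeasure \<mu> K)"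
    using rad unfolding radon_def by (metis open_UNIV)
  have "{K. compact K \<and> K \<subseteq> UNIV} \<noteq> {}" using compact_empty by blast
  then obtain C where C: "compact C" "emeasure \<mu> UNIV < emeasure \<mu> C + ennreal e"
    using SUP_approx_ennreal[OF e _ sup] fin by (auto simp: less_top)
  have "emeasure \<mu> C + emeasure \<mu> (- C) = emeasure \<mu> UNIV"
    using C(1) sets plus_emeasure[of C \<mu> "- C"] by (simp add: borel_compact borel_open open_Compl compact_imp_closed)
  with C(2) have "emeasure \<mu> C + emeasure \<mu> (- C) < emeasure \<mu> C + ennreal e" by simp
  with C(1) show ?thesis by (auto simp: ennreal_add_left_cancel_less intro: less_imp_le)
qed

lemma emeasure_eq_SUP_Int_incseq:
  assumes sets: "sets \<mu> = sets borel" and K: "\<And>n. K n \<in> sets borel" "incseq K"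
    and null: "emeasure \<mu> (- (\<Union>n. K n)) = 0" and B: "B \<in> sets borel"
  shows "emeasure \<mu> B = (SUP n. emeasure \<mu> (K n \<inter> B))"
proof -
  have "- (\<Union>n. K n) \<in> null_sets \<mu>" using null K sets by (auto intro: null_setsI)
  then have "emeasure \<mu> B = emeasure \<mu> (B - (- (\<Union>n. K n)))"
    using B sets by (simp add: emeasure_Diff_null_set)
  also have "B - (- (\<Union>n. K n)) = (\<Union>n. K n \<inter> B)" by auto
  also have "emeasure \<mu> (\<Union>n. K n \<inter> B) = (SUP n. emeasure \<mu> (K n \<inter> B))"
    using K B sets by (intro SUP_emeasure_incseq[symmetric]) (auto simp: incseq_def)
  finally show ?thesis .
qed

lemma radon_finite_exhaustion:
  fixes \<mu> :: "'a::t2_space measure"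
  assumes rad: "radon \<mu>" and fin: "emeasure \<mu> UNIV < \<infinity>" and cl: "closed A"
    and null: "emeasure \<mu> (- A) = 0"
  shows "\<exists>K. (\<forall>n. compact (K n) \<and> K n \<subseteq> A) \<and> incseq K \<and>
             (\<forall>B\<in>sets borel. emeasure \<mu> B = (SUP n. emeasure \<mu> (K n \<inter> B)))"
proof -
  have sets: "sets \<mu> = sets borel" using rad by (simp add: radon_def)
  have "\<exists>C. compact C \<and> emeasure \<mu> (- C) \<le> ennreal (1 / Suc n)" for n
    by (rule radon_finite_compact_approx[OF rad fin]) simp
  then obtain C where C: "\<And>n. compact (C n)" "\<And>n. emeasure \<mu> (- C n) \<le> ennreal (1 / Suc n)"
    by metis
  define K where "K n = A \<inter> (\<Union>i\<le>n. C i)" for n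
  have Kc: "compact (K n) \<and> K n \<subseteq> A" for n
    unfolding K_def using C(1) cl by (auto intro!: closed_Int_compact compact_UN)
  have Kinc: "incseq K" unfolding K_def incseq_def by (auto intro: order_trans)
  have "emeasure \<mu> (- (\<Union>n. K n)) = 0"
  proof (rule ennreal_le_inverse_Suc_imp_zero)
    fix n
    have "emeasure \<mu> (- (\<Union>n. K n)) \<le> emeasure \<mu> (- A \<union> - C n)"
      using cl C(1) sets unfolding K_def
      by (intro emeasure_mono) (auto simp: borel_open compact_imp_closed)
    also have "\<dots> \<le> emeasure \<mu> (- A) + emeasure \<mu> (- C n)"
      using cl C(1) sets by (intro emeasure_subadditive) (auto simp: borel_open compact_imp_closed)
    also have "\<dots> \<le> ennreal (1 / Suc n)" using null C(2)[of n] by simp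
    finally show "emeasure \<mu> (- (\<Union>n. K n)) \<le> ennreal (1 / Suc n)" .
  qed
  then show ?thesis
    using Kc Kinc emeasure_eq_SUP_Int_incseq[OF sets _ Kinc] by (auto simp: borel_compact)
qed

lemma tendsto_nn_integral_exhaustion:
  assumes sets: "sets \<mu> = sets borel" and K: "\<And>n. K n \<in> sets borel" "incseq K"
    and exh: "\<And>B. B \<in> sets borel \<Longrightarrow> emeasure \<mu> B = (SUP n. emeasure \<mu> (K n \<inter> B))"
    and f: "f \<in> borel_measurable borel"
  shows "(\<lambda>n. \<integral>\<^sup>+x. f x * indicator (K n) x \<partial>\<mu>) \<longlonglongrightarrow> (\<integral>\<^sup>+x. f x \<partial>\<mu>)"
proof -
  have fm: "f \<in> borel_measurable \<mu>" using f sets measurable_cong_sets by blast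
  have eq: "(\<integral>\<^sup>+x. f x * indicator (K n) x \<partial>\<mu>) = (\<integral>\<^sup>+x. f x \<partial>scaled_restriction \<mu> 1 (K n))" for n
    using nn_integral_scaled_restriction[OF fm, of "K n" 1] K sets by simp
  have "incseq (\<lambda>n. \<integral>\<^sup>+x. f x * indicator (K n) x \<partial>\<mu>)"
    unfolding incseq_def
    by (intro allI impI nn_integral_mono mult_left_mono) (use K(2) in \<open>auto simp: incseq_def split: split_indicator\<close>)
  then have "(\<lambda>n. \<integral>\<^sup>+x. f x * indicator (K n) x \<partial>\<mu>) \<longlonglongrightarrow> (SUP n. \<integral>\<^sup>+x. f x * indicator (K n) x \<partial>\<mu>)"
    by (rule LIMSEQ_SUP)
  also have "(SUP n. \<integral>\<^sup>+x. f x * indicator (K n) x \<partial>\<mu>) = (\<integral>\<^sup>+x. f x \<partial>\<mu>)"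
    unfolding eq using scaled_restriction_SUP[OF sets K exh] sets
    by (intro nn_integral_SUP_measure) auto
  finally show ?thesis .
qed

lemma infsum_cmult_ennreal: "infsum (\<lambda>p. c * f p) A = c * infsum f (A::'b set)" for f :: "'b \<Rightarrow> ennreal"
proof -
  have "infsum (\<lambda>p. c * f p) A = (SUP F\<in>{F. finite F \<and> F\<subseteq>A}. sum (\<lambda>p. c * f p) F)"
    by (rule nonneg_infsum_complete) simp
  also have "\<dots> = (SUP F\<in>{F. finite F \<and> F\<subseteq>A}. c * sum f F)"
    by (simp add: sum_distrib_left)
  also have "\<dots> = c * (SUP F\<in>{F. finite F \<and> F\<subseteq>A}. sum f F)"
    by (simp add: SUP_mult_left_ennreal)
  also have "\<dots> = c * infsum f A"
    by (subst nonneg_infsum_complete) simp_all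
  finally show ?thesis .
qed

lemma infsum_mono_ennreal: "(\<And>p. p \<in> A \<Longrightarrow> f p \<le> g p) \<Longrightarrow> infsum f A \<le> infsum g (A::'b set)"
  for f g :: "'b \<Rightarrow> ennreal"
  by (rule infsum_mono) (auto intro: nonneg_summable_on_complete)

lemma borel_measurable_weight_indicator:
  fixes g :: "'a::topological_space \<Rightarrow> real"
  assumes "continuous_on S g" "K \<subseteq> S" "K \<in> sets borel"
  shows "(\<lambda>x. ennreal (g x) * indicator K x) \<in> borel_measurable borel"
proof -
  have "(\<lambda>x. indicator K x *\<^sub>R g x) \<in> borel_measurable borel"
    using assms by (intro borel_measurable_continuous_on_indicator) (auto intro: continuous_on_subset)
  then have "(\<lambda>x. ennreal (indicator K x *\<^sub>R g x)) \<in> borel_measurable borel" by measurable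
  moreover have "(\<lambda>x. ennreal (indicator K x *\<^sub>R g x)) = (\<lambda>x. ennreal (g x) * indicator K x)"
    by (auto simp: indicator_def)
  ultimately show ?thesis by simp
qed

lemma finite_vec_energy_mono_cmult:
  fixes \<kappa> :: "'a::t2_space \<Rightarrow> 'a \<Rightarrow> ennreal"
  assumes lsc: "\<forall>t. open {p :: 'a \<times> 'a. t < \<kappa> (fst p) (snd p)}"
    and rad: "\<And>i. i \<in> Ip \<union> In \<Longrightarrow> radon (\<mu> i)"
    and sets: "\<And>i. i \<in> Ip \<union> In \<Longrightarrow> sets (\<nu> i) = sets borel"
    and le: "\<And>i B. i \<in> Ip \<union> In \<Longrightarrow> B \<in> sets borel \<Longrightarrow> emeasure (\<nu> i) B \<le> ennreal c * emeasure (\<mu> i) B"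
    and fve: "finite_vec_energy \<kappa> Ip In \<mu>"
  shows "finite_vec_energy \<kappa> Ip In \<nu>"
proof -
  have en_le: "en \<kappa> (\<nu> i) (\<nu> j) \<le> ennreal c * (ennreal c * en \<kappa> (\<mu> i) (\<mu> j))"
    if "i \<in> Ip \<union> In" "j \<in> Ip \<union> In" for i j
    using rad that by (intro en_mono_cmult[OF lsc sets _ sets _ radon_imp_open_inner_regular le le])
      (auto simp: radon_def)
  have fin: "(\<Sum>\<^sub>\<infinity> p\<in>S. en \<kappa> (\<nu> (fst p)) (\<nu> (snd p))) < \<infinity>"
    if S: "S \<subseteq> (Ip \<union> In) \<times> (Ip \<union> In)" and f: "(\<Sum>\<^sub>\<infinity> p\<in>S. en \<kappa> (\<mu> (fst p)) (\<mu> (snd p))) < \<infinity>" for S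
  proof -
    have "(\<Sum>\<^sub>\<infinity> p\<in>S. en \<kappa> (\<nu> (fst p)) (\<nu> (snd p))) \<le>
        (\<Sum>\<^sub>\<infinity> p\<in>S. ennreal c * (ennreal c * en \<kappa> (\<mu> (fst p)) (\<mu> (snd p))))"
      using S by (intro infsum_mono_ennreal en_le) auto
    also have "\<dots> = ennreal c * (ennreal c * (\<Sum>\<^sub>\<infinity> p\<in>S. en \<kappa> (\<mu> (fst p)) (\<mu> (snd p))))"
      by (simp add: infsum_cmult_ennreal)
    also have "\<dots> < \<infinity>" using f by (simp add: ennreal_mult_less_top)
    finally show ?thesis .
  qed
  show ?thesis
    using fve unfolding finite_vec_energy_def by (intro conjI fin) auto
qed

lemma admissible_scaled_restriction:
  fixes \<kappa> :: "'a::t2_space \<Rightarrow> 'a \<Rightarrow> ennreal"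
  assumes lsc: "\<forall>t. open {p :: 'a \<times> 'a. t < \<kappa> (fst p) (snd p)}"
    and adm: "\<mu> \<in> admissible \<kappa> Ip In A a g"
    and l: "l \<in> Ip \<union> In" and K: "compact K" "K \<subseteq> A l"
    and c: "1 \<le> c"
    and gm: "(\<lambda>x. ennreal (g x) * indicator K x) \<in> borel_measurable borel"
    and norm: "ennreal c * (\<integral>\<^sup>+x. ennreal (g x) * indicator K x \<partial>\<mu> l) = ennreal (a l)"
  shows "\<mu>(l := scaled_restriction (\<mu> l) c K) \<in> admissible \<kappa> Ip In (A(l := K)) a g"
proof -
  let ?\<mu> = "\<mu>(l := scaled_restriction (\<mu> l) c K)"
  have rad: "\<And>i. i \<in> Ip \<union> In \<Longrightarrow> radon (\<mu> i)" and
    conc: "\<And>i. i \<in> Ip \<union> In \<Longrightarrow> concentrated (\<mu> i) (A i)" and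
    int: "\<And>i. i \<in> Ip \<union> In \<Longrightarrow> (\<integral>\<^sup>+ x. ennreal (g x) * indicator (A i) x \<partial>\<mu> i) = ennreal (a i)" and
    fve: "finite_vec_energy \<kappa> Ip In \<mu>"
    using adm unfolding admissible_def by auto
  have sets: "\<And>i. i \<in> Ip \<union> In \<Longrightarrow> sets (\<mu> i) = sets borel" using rad by (simp add: radon_def)
  have Km: "K \<in> sets borel" using K borel_compact by auto
  have le: "emeasure (?\<mu> i) B \<le> ennreal c * emeasure (\<mu> i) B"
    if "i \<in> Ip \<union> In" "B \<in> sets borel" for i B
  proof (cases "i = l")
    case True then show ?thesis using scaled_restriction_le[OF sets[OF l] Km _ c] that by simp
  next
    case False then show ?thesis using mult_right_mono[OF ennreal_leI[OF c], of "emeasure (\<mu> i) B"] by simp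
  qed
  have fve': "finite_vec_energy \<kappa> Ip In ?\<mu>"
    using sets l by (intro finite_vec_energy_mono_cmult[OF lsc rad _ le fve]) auto
  have "(\<integral>\<^sup>+ x. ennreal (g x) * indicator K x \<partial>scaled_restriction (\<mu> l) c K) =
      ennreal c * (\<integral>\<^sup>+ x. ennreal (g x) * indicator K x * indicator K x \<partial>\<mu> l)"
    using gm Km sets[OF l] measurable_cong_sets[of borel "\<mu> l"]
    by (intro nn_integral_scaled_restriction) auto
  also have "\<dots> = ennreal (a l)"
    using norm by (simp add: mult.assoc flip: indicator_inter_arith)
  finally have int_l: "(\<integral>\<^sup>+ x. ennreal (g x) * indicator K x \<partial>scaled_restriction (\<mu> l) c K) = ennreal (a l)" .
  show ?thesis
    unfolding admissible_def
  proof (intro CollectI conjI ballI fve')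
    fix i assume i: "i \<in> Ip \<union> In"
    show "radon (?\<mu> i)"
      using rad[OF i] radon_scaled_restriction[OF rad[OF l] K(1), of c] c by auto
    show "concentrated (?\<mu> i) ((A(l := K)) i)"
      using conc[OF i] concentrated_scaled_restriction[OF sets[OF l] K(1)] by auto
    show "(\<integral>\<^sup>+ x. ennreal (g x) * indicator ((A(l := K)) i) x \<partial>?\<mu> i) = ennreal (a i)"
      using int[OF i] int_l by (cases "i = l") auto
  qed
qed

lemma admissible_restrict_subset:
  fixes \<kappa> :: "'a::t2_space \<Rightarrow> 'a \<Rightarrow> ennreal"
  assumes K: "K \<subseteq> A l" "K \<in> sets borel"
  shows "admissible \<kappa> Ip In (A(l := K)) a g \<subseteq> admissible \<kappa> Ip In A a g"
proof
  fix \<mu> assume adm: "\<mu> \<in> admissible \<kappa> Ip In (A(l := K)) a g"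
  have rad: "\<And>i. i \<in> Ip \<union> In \<Longrightarrow> radon (\<mu> i)" and
    conc: "\<And>i. i \<in> Ip \<union> In \<Longrightarrow> concentrated (\<mu> i) ((A(l := K)) i)" and
    int: "\<And>i. i \<in> Ip \<union> In \<Longrightarrow> (\<integral>\<^sup>+ x. ennreal (g x) * indicator ((A(l := K)) i) x \<partial>\<mu> i) = ennreal (a i)" and
    fve: "finite_vec_energy \<kappa> Ip In \<mu>"
    using adm unfolding admissible_def by auto
  show "\<mu> \<in> admissible \<kappa> Ip In A a g"
    unfolding admissible_def
  proof (intro CollectI conjI ballI fve)
    fix i assume i: "i \<in> Ip \<union> In"
    show "radon (\<mu> i)" by (rule rad[OF i])
    show "concentrated (\<mu> i) (A i)"
    proof (cases "i = l")
      case False then show ?thesis using conc[OF i] by simp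
    next
      case True then show ?thesis using conc[OF i] K unfolding concentrated_def by auto
    qed
    show "(\<integral>\<^sup>+ x. ennreal (g x) * indicator (A i) x \<partial>\<mu> i) = ennreal (a i)"
    proof (cases "i = l")
      case False then show ?thesis using int[OF i] by simp
    next
      case True
      obtain B where B: "B \<in> sets borel" "- K \<subseteq> B" "emeasure (\<mu> l) B = 0"
        using conc[OF i] True unfolding concentrated_def by auto
      have sl: "sets (\<mu> l) = sets borel" using rad[OF i] True by (simp add: radon_def)
      have "AE x in \<mu> l. x \<notin> B"
        by (rule AE_I'[of B]) (use B sl in \<open>auto intro: null_setsI\<close>)
      then have "(\<integral>\<^sup>+ x. ennreal (g x) * indicator (A l) x \<partial>\<mu> l) = (\<integral>\<^sup>+ x. ennreal (g x) * indicator K x \<partial>\<mu> l)"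
        by (intro nn_integral_cong_AE) (use B K in \<open>auto elim!: eventually_mono simp: indicator_def\<close>)
      then show ?thesis using int[OF i] True by simp
    qed
  qed
qed

lemma concentrated_emeasure_Compl:
  assumes "sets \<nu> = sets borel" "concentrated \<nu> E"
  shows "emeasure \<nu> (- E) = 0"
proof -
  obtain B where "B \<in> sets borel" "- E \<subseteq> B" "emeasure \<nu> B = 0"
    using assms(2) unfolding concentrated_def by blast
  then show ?thesis using assms(1) emeasure_mono[of "- E" B \<nu>] by simp
qed

lemma admissible_component_finite:
  assumes weight: "weight_ok \<kappa> (Ip \<union> In) A g" and adm: "\<mu> \<in> admissible \<kappa> Ip In A a g"
    and l: "l \<in> Ip \<union> In" and cl: "closed (A l)"
  shows "emeasure (\<mu> l) UNIV < \<infinity>"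
proof -
  obtain c0 where c0: "c0 > 0" "\<And>x. x \<in> A l \<Longrightarrow> c0 \<le> g x"
    using weight l unfolding weight_ok_def by blast
  have sl: "sets (\<mu> l) = sets borel" and conc: "concentrated (\<mu> l) (A l)"
    and int: "(\<integral>\<^sup>+ x. ennreal (g x) * indicator (A l) x \<partial>\<mu> l) = ennreal (a l)"
    using adm l unfolding admissible_def radon_def by auto
  have Alm: "A l \<in> sets borel" using cl by (simp add: borel_closed)
  have "ennreal c0 * emeasure (\<mu> l) (A l) = (\<integral>\<^sup>+ x. ennreal c0 * indicator (A l) x \<partial>\<mu> l)"
    using Alm sl by (simp add: nn_integral_cmult_indicator)
  also have "\<dots> \<le> (\<integral>\<^sup>+ x. ennreal (g x) * indicator (A l) x \<partial>\<mu> l)"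
    using c0(2) by (intro nn_integral_mono) (auto simp: indicator_def intro: ennreal_leI)
  finally have "ennreal c0 * emeasure (\<mu> l) (A l) < \<infinity>"
    using int by (simp add: order_le_less_trans)
  then have "emeasure (\<mu> l) (A l) < \<infinity>"
    using c0(1) by (auto simp: ennreal_mult_less_top)
  moreover have "emeasure (\<mu> l) UNIV \<le> emeasure (\<mu> l) (A l) + emeasure (\<mu> l) (- A l)"
    using emeasure_subadditive[of "A l" "\<mu> l" "- A l"] Alm sl by (simp add: Un_absorb)
  ultimately show ?thesis
    using concentrated_emeasure_Compl[OF sl conc] by (simp add: top.not_eq_extremum le_less_trans)
qed

section \<open>The energy functional\<close>

text \<open>
  \<open>G\<^sub>\<chi>(\<mu>)\<close> as a function of the mutual energies of \<open>\<chi> = (\<chi>\<^sup>+, \<chi>\<^sup>-)\<close> and of the sums \<open>P\<close>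
  and \<open>N\<close> of the components of \<open>\<mu>\<close> over \<open>I\<^sup>+\<close> and \<open>I\<^sup>-\<close>, taken in the order
  \<open>(P,P) (N,N) (P,N) (N,P) (\<chi>\<^sup>+,P) (\<chi>\<^sup>-,N) (\<chi>\<^sup>+,N) (\<chi>\<^sup>-,P)\<close>. This separates the energies
  in which \<open>N\<close> enters positively from those in which it enters negatively.
\<close>
definition Gform :: "ennreal \<Rightarrow> ennreal \<Rightarrow> ennreal \<Rightarrow> ennreal \<Rightarrow> ennreal \<Rightarrow> ennreal \<Rightarrow> ennreal \<Rightarrow> ennreal \<Rightarrow> ereal" where
  "Gform p n b1 b2 c1 c2 d1 d2 = ((enn2ereal p + enn2ereal n) - (enn2ereal b1 + enn2ereal b2)) +
      2 * ((enn2ereal c1 + enn2ereal c2) - (enn2ereal d1 + enn2ereal d2))"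

lemma Gchi_eq_Gform: "Gchi \<kappa> chi Ip In \<mu> = Gform (en \<kappa> (summeas \<mu> Ip) (summeas \<mu> Ip)) (en \<kappa> (summeas \<mu> In) (summeas \<mu> In))
   (en \<kappa> (summeas \<mu> Ip) (summeas \<mu> In)) (en \<kappa> (summeas \<mu> In) (summeas \<mu> Ip))
   (en \<kappa> (fst chi) (summeas \<mu> Ip)) (en \<kappa> (snd chi) (summeas \<mu> In))
   (en \<kappa> (fst chi) (summeas \<mu> In)) (en \<kappa> (snd chi) (summeas \<mu> Ip))"
  unfolding Gchi_def senergy_def Rmeas_def Gform_def by simp

lemma Gform_mono:
  assumes "n \<le> n'" "b1' \<le> b1" "b2' \<le> b2" "c2 \<le> c2'" "d1' \<le> d1"
  shows "Gform p n b1 b2 c1 c2 d1 d2 \<le> Gform p n' b1' b2' c1 c2' d1' d2"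
proof -
  have le: "enn2ereal x \<le> enn2ereal y" if "x \<le> y" for x y
    using that by (simp add: less_eq_ennreal.rep_eq)
  have "(enn2ereal p + enn2ereal n) - (enn2ereal b1 + enn2ereal b2)
      \<le> (enn2ereal p + enn2ereal n') - (enn2ereal b1' + enn2ereal b2')"
    using assms by (intro ereal_minus_mono add_mono le order_refl)
  moreover have "(enn2ereal c1 + enn2ereal c2) - (enn2ereal d1 + enn2ereal d2)
      \<le> (enn2ereal c1 + enn2ereal c2') - (enn2ereal d1' + enn2ereal d2)"
    using assms by (intro ereal_minus_mono add_mono le order_refl)
  ultimately show ?thesis
    unfolding Gform_def by (intro add_mono ereal_mult_left_mono) simp_all
qed

lemma enn2ereal_add_ne_minf: "enn2ereal a + enn2ereal b \<noteq> - \<infinity>"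
proof -
  have "0 \<le> enn2ereal a + enn2ereal b" by (intro add_nonneg_nonneg enn2ereal_nonneg)
  then show ?thesis by auto
qed

lemma Gform_tendsto:
  assumes fin: "Gform p n b1 b2 c1 c2 d1 d2 \<noteq> \<infinity>"
    and t: "fn \<longlonglongrightarrow> n" "fb1 \<longlonglongrightarrow> b1" "fb2 \<longlonglongrightarrow> b2" "fc2 \<longlonglongrightarrow> c2" "fd1 \<longlonglongrightarrow> d1"
  shows "(\<lambda>k. Gform p (fn k) (fb1 k) (fb2 k) c1 (fc2 k) (fd1 k) d2) \<longlonglongrightarrow> Gform p n b1 b2 c1 c2 d1 d2"
proof -
  define X where "X = enn2ereal p + enn2ereal n"
  define Y where "Y = enn2ereal b1 + enn2ereal b2"
  define Xc where "Xc = enn2ereal c1 + enn2ereal c2"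
  define Yc where "Yc = enn2ereal d1 + enn2ereal d2"
  have G: "Gform p n b1 b2 c1 c2 d1 d2 = (X - Y) + 2 * (Xc - Yc)"
    unfolding Gform_def X_def Y_def Xc_def Yc_def ..
  have X: "X \<noteq> \<infinity>"
  proof
    assume "X = \<infinity>" then have "Gform p n b1 b2 c1 c2 d1 d2 = \<infinity>" unfolding G by simp
    with fin show False by simp
  qed
  have Xc: "Xc \<noteq> \<infinity>"
  proof
    assume "Xc = \<infinity>" then have "Gform p n b1 b2 c1 c2 d1 d2 = \<infinity>" unfolding G
      by (cases "X - Y") auto
    with fin show False by simp
  qed
  have Xm: "X \<noteq> - \<infinity>" "Xc \<noteq> - \<infinity>" "Y \<noteq> - \<infinity>" "Yc \<noteq> - \<infinity>"
    unfolding X_def Xc_def Y_def Yc_def by (rule enn2ereal_add_ne_minf)+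
  have tX: "(\<lambda>k. enn2ereal p + enn2ereal (fn k)) \<longlonglongrightarrow> X"
    unfolding X_def by (intro tendsto_add_ereal_general) (use t in auto)
  have tY: "(\<lambda>k. enn2ereal (fb1 k) + enn2ereal (fb2 k)) \<longlonglongrightarrow> Y"
    unfolding Y_def by (intro tendsto_add_ereal_general) (use t in auto)
  have tXc: "(\<lambda>k. enn2ereal c1 + enn2ereal (fc2 k)) \<longlonglongrightarrow> Xc"
    unfolding Xc_def by (intro tendsto_add_ereal_general) (use t in auto)
  have tYc: "(\<lambda>k. enn2ereal (fd1 k) + enn2ereal d2) \<longlonglongrightarrow> Yc"
    unfolding Yc_def by (intro tendsto_add_ereal_general) (use t in auto)
  have t1: "(\<lambda>k. (enn2ereal p + enn2ereal (fn k)) - (enn2ereal (fb1 k) + enn2ereal (fb2 k))) \<longlonglongrightarrow> X - Y"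
    by (rule tendsto_diff_ereal_general[OF tX tY]) (use X Xm in auto)
  have t2: "(\<lambda>k. (enn2ereal c1 + enn2ereal (fc2 k)) - (enn2ereal (fd1 k) + enn2ereal d2)) \<longlonglongrightarrow> Xc - Yc"
    by (rule tendsto_diff_ereal_general[OF tXc tYc]) (use Xc Xm in auto)
  have t2': "(\<lambda>k. 2 * ((enn2ereal c1 + enn2ereal (fc2 k)) - (enn2ereal (fd1 k) + enn2ereal d2))) \<longlonglongrightarrow> 2 * (Xc - Yc)"
    by (rule tendsto_cmult_ereal[OF _ t2]) simp
  have ne1: "X - Y \<noteq> \<infinity>" using X Xm by (cases X; cases Y) auto
  have ne2: "2 * (Xc - Yc) \<noteq> \<infinity>" using Xc Xm by (cases Xc; cases Yc) auto
  show ?thesis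
    unfolding G unfolding Gform_def
    by (rule tendsto_add_ereal_general[OF _ t1 t2']) (use ne1 ne2 in auto)
qed

lemma tendsto_ennreal_cmult_one:
  fixes x :: ennreal
  assumes "x \<noteq> \<infinity>" "c \<longlonglongrightarrow> 1" "\<And>n. 0 \<le> c n"
  shows "(\<lambda>n. ennreal (c n) * x) \<longlonglongrightarrow> x"
proof -
  obtain r where r: "x = ennreal r" "0 \<le> r" using assms(1) by (cases x) auto
  have "(\<lambda>n. c n * r) \<longlonglongrightarrow> 1 * r"
    by (intro tendsto_mult assms(2) tendsto_const)
  then have "(\<lambda>n. ennreal (c n * r)) \<longlonglongrightarrow> ennreal r" by (intro tendsto_ennrealI) simp
  then show ?thesis using r assms(3) by (simp add: ennreal_mult)
qed

lemma Gchi_le_Gform: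
  fixes \<kappa> :: "'a::t2_space \<Rightarrow> 'a \<Rightarrow> ennreal"
  assumes lsc: "\<forall>t. open {p :: 'a \<times> 'a. t < \<kappa> (fst p) (snd p)}"
    and P: "summeas \<mu> Ip = P"
    and sets: "sets N = sets borel" "sets L = sets borel"
      "sets (fst chi) = sets borel" "sets (snd chi) = sets borel"
    and ireg: "open_inner_regular N"
    and low: "\<And>B. B \<in> sets borel \<Longrightarrow> emeasure L B \<le> emeasure (summeas \<mu> In) B"
    and up: "\<And>B. B \<in> sets borel \<Longrightarrow> emeasure (summeas \<mu> In) B \<le> ennreal c * emeasure N B"
  shows "Gchi \<kappa> chi Ip In \<mu> \<le> Gform (en \<kappa> P P) (ennreal c * (ennreal c * en \<kappa> N N))
           (en \<kappa> P L) (en \<kappa> L P) (en \<kappa> (fst chi) P) (ennreal c * en \<kappa> (snd chi) N)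
           (en \<kappa> (fst chi) L) (en \<kappa> (snd chi) P)"
proof -
  let ?N = "summeas \<mu> In"
  have sN: "sets ?N = sets borel" by simp
  have sP: "sets P = sets borel" using P[symmetric] by simp
  have "en \<kappa> ?N ?N \<le> ennreal c * (ennreal c * en \<kappa> N N)"
    by (rule en_mono_cmult[OF lsc sN sets(1) sN sets(1) ireg up up])
  moreover have "en \<kappa> P L \<le> en \<kappa> P ?N" "en \<kappa> L P \<le> en \<kappa> ?N P"
    by (rule en_mono; use sN sP sets low in simp)+
  moreover have "en \<kappa> (snd chi) ?N \<le> 1 * (ennreal c * en \<kappa> (snd chi) N)"
    by (rule en_mono_cmult[OF lsc sets(4) sets(4) sN sets(1) ireg _ up]) simp
  moreover have "en \<kappa> (fst chi) L \<le> en \<kappa> (fst chi) ?N"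
    by (rule en_mono) (use sN sets low in simp_all)
  ultimately show ?thesis
    unfolding Gchi_eq_Gform P by (intro Gform_mono) simp_all
qed

lemma Gform_bound_tendsto:
  fixes \<kappa> :: "'a::t2_space \<Rightarrow> 'a \<Rightarrow> ennreal"
  assumes lsc: "\<forall>t. open {p :: 'a \<times> 'a. t < \<kappa> (fst p) (snd p)}"
    and sets: "sets P = sets borel" "sets N = sets borel" "\<And>n. sets (L n) = sets borel"
      "sets (fst chi) = sets borel"
    and ireg: "\<And>n. open_inner_regular (L n)"
    and L_inc: "\<And>B. B \<in> sets borel \<Longrightarrow> incseq (\<lambda>n. emeasure (L n) B)"
    and L_sup: "\<And>B. B \<in> sets borel \<Longrightarrow> (SUP n. emeasure (L n) B) = emeasure N B"
    and c: "c \<longlonglongrightarrow> 1" "\<And>n. 0 \<le> c n"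
    and fin: "Gform (en \<kappa> P P) (en \<kappa> N N) (en \<kappa> P N) (en \<kappa> N P) C1 C2 (en \<kappa> (fst chi) N) D2 \<noteq> \<infinity>"
  shows "(\<lambda>n. Gform (en \<kappa> P P) (ennreal (c n) * (ennreal (c n) * en \<kappa> N N)) (en \<kappa> P (L n))
            (en \<kappa> (L n) P) C1 (ennreal (c n) * C2) (en \<kappa> (fst chi) (L n)) D2)
         \<longlonglongrightarrow> Gform (en \<kappa> P P) (en \<kappa> N N) (en \<kappa> P N) (en \<kappa> N P) C1 C2 (en \<kappa> (fst chi) N) D2"
proof (rule Gform_tendsto[OF fin])
  have L_mono: "en \<kappa> Q (L m) \<le> en \<kappa> Q (L n)" "en \<kappa> (L m) Q \<le> en \<kappa> (L n) Q"
    if "sets Q = sets borel" "m \<le> n" for Q m n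
    using that sets L_inc by (auto intro!: en_mono simp: incseq_def)
  have eN: "en \<kappa> N N \<noteq> \<infinity>"
    using fin by (auto simp: Gform_def)
  have C2: "C2 \<noteq> \<infinity>"
  proof
    assume "C2 = \<infinity>"
    then show False using fin eN unfolding Gform_def
      by (cases "enn2ereal (en \<kappa> (fst chi) N) + enn2ereal D2") (auto simp: ereal_minus_eq_PInfty_iff)
  qed
  have cc: "(\<lambda>n. c n * c n) \<longlonglongrightarrow> 1"
    using tendsto_mult[OF c(1) c(1)] by simp
  show "(\<lambda>n. ennreal (c n) * (ennreal (c n) * en \<kappa> N N)) \<longlonglongrightarrow> en \<kappa> N N"
    using tendsto_ennreal_cmult_one[OF eN cc] c(2)
    by (simp add: ennreal_mult mult.assoc)
  show "(\<lambda>n. ennreal (c n) * C2) \<longlonglongrightarrow> C2"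
    by (rule tendsto_ennreal_cmult_one[OF C2 c])
  have "(\<lambda>n. en \<kappa> P (L n)) \<longlonglongrightarrow> (SUP n. en \<kappa> P (L n))"
    by (rule LIMSEQ_SUP) (simp add: incseq_def L_mono(1)[OF sets(1)])
  also have "(SUP n. en \<kappa> P (L n)) = en \<kappa> P N"
    by (rule en_SUP_right[OF lsc sets(1,2,3) ireg L_inc L_sup])
  finally show "(\<lambda>n. en \<kappa> P (L n)) \<longlonglongrightarrow> en \<kappa> P N" .
  have "(\<lambda>n. en \<kappa> (L n) P) \<longlonglongrightarrow> (SUP n. en \<kappa> (L n) P)"
    by (rule LIMSEQ_SUP) (simp add: incseq_def L_mono(2)[OF sets(1)])
  also have "(SUP n. en \<kappa> (L n) P) = en \<kappa> N P"
    by (rule en_SUP_left[OF sets(2,3) L_inc L_sup])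
  finally show "(\<lambda>n. en \<kappa> (L n) P) \<longlonglongrightarrow> en \<kappa> N P" .
  have "(\<lambda>n. en \<kappa> (fst chi) (L n)) \<longlonglongrightarrow> (SUP n. en \<kappa> (fst chi) (L n))"
    by (rule LIMSEQ_SUP) (simp add: incseq_def L_mono(1)[OF sets(4)])
  also have "(SUP n. en \<kappa> (fst chi) (L n)) = en \<kappa> (fst chi) N"
    by (rule en_SUP_right[OF lsc sets(4,2,3) ireg L_inc L_sup])
  finally show "(\<lambda>n. en \<kappa> (fst chi) (L n)) \<longlonglongrightarrow> en \<kappa> (fst chi) N" .
qed

lemma Gchi_scaled_restriction_le:
  fixes \<kappa> :: "'a::t2_space \<Rightarrow> 'a \<Rightarrow> ennreal"
  assumes lsc: "\<forall>t. open {p :: 'a \<times> 'a. t < \<kappa> (fst p) (snd p)}"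
    and schi: "sets (fst chi) = sets borel" "sets (snd chi) = sets borel"
    and rad: "\<And>i. i \<in> Ip \<union> In \<Longrightarrow> radon (\<mu> i)"
    and l: "l \<in> In" "l \<notin> Ip"
    and K: "compact K0" "compact K" "K0 \<subseteq> K"
    and c: "1 \<le> c" "c \<le> c'"
  shows "Gchi \<kappa> chi Ip In (\<mu>(l := scaled_restriction (\<mu> l) c K)) \<le>
    Gform (en \<kappa> (summeas \<mu> Ip) (summeas \<mu> Ip))
      (ennreal c' * (ennreal c' * en \<kappa> (summeas \<mu> In) (summeas \<mu> In)))
      (en \<kappa> (summeas \<mu> Ip) (summeas (\<mu>(l := scaled_restriction (\<mu> l) 1 K0)) In))
      (en \<kappa> (summeas (\<mu>(l := scaled_restriction (\<mu> l) 1 K0)) In) (summeas \<mu> Ip))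
      (en \<kappa> (fst chi) (summeas \<mu> Ip)) (ennreal c' * en \<kappa> (snd chi) (summeas \<mu> In))
      (en \<kappa> (fst chi) (summeas (\<mu>(l := scaled_restriction (\<mu> l) 1 K0)) In)) (en \<kappa> (snd chi) (summeas \<mu> Ip))"
proof (rule Gchi_le_Gform[OF lsc _ _ _ schi])
  have sets: "\<And>i. i \<in> Ip \<union> In \<Longrightarrow> sets (\<mu> i) = sets borel" using rad by (simp add: radon_def)
  have sl: "sets (\<mu> l) = sets borel" using sets l by auto
  have c1: "1 \<le> c'" using c by simp
  show "summeas (\<mu>(l := scaled_restriction (\<mu> l) c K)) Ip = summeas \<mu> Ip"
    using l by (intro summeas_cong) auto
  show "open_inner_regular (summeas \<mu> In)"
    using rad by (intro open_inner_regular_summeas) auto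
  fix B :: "'a set" assume B: "B \<in> sets borel"
  have le_c: "x \<le> ennreal c * x" for x
    using mult_right_mono[OF ennreal_leI[OF c(1)], of x] by simp
  have "emeasure (\<mu> l) (K0 \<inter> B) \<le> emeasure (\<mu> l) (K \<inter> B)"
    using K B sl by (intro emeasure_mono) (auto simp: borel_compact)
  then have "emeasure (\<mu> l) (K0 \<inter> B) \<le> ennreal c * emeasure (\<mu> l) (K \<inter> B)"
    using le_c order.trans by blast
  with le_c show "emeasure (summeas (\<mu>(l := scaled_restriction (\<mu> l) 1 K0)) In) B \<le>
      emeasure (summeas (\<mu>(l := scaled_restriction (\<mu> l) c K)) In) B"
    using sets sl B K by (intro summeas_emeasure_mono) (auto simp: scaled_restriction_emeasure borel_compact)
  have le_c': "x \<le> ennreal c' * x" for x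
    using mult_right_mono[OF ennreal_leI[OF c1], of x] by simp
  have "ennreal c * emeasure (\<mu> l) (K \<inter> B) \<le> ennreal c' * emeasure (\<mu> l) B"
    using K B sl c by (intro mult_mono ennreal_leI emeasure_mono) (auto simp: borel_compact)
  with le_c' show "emeasure (summeas (\<mu>(l := scaled_restriction (\<mu> l) c K)) In) B \<le>
      ennreal c' * emeasure (summeas \<mu> In) B"
    using sets sl B K by (intro summeas_emeasure_le_cmult) (auto simp: scaled_restriction_emeasure borel_compact)
qed simp_all

section \<open>Exhausting the last plate by compact sets\<close>

lemma Ginf_le_Ginf_restrict:
  assumes "K \<subseteq> A l" "K \<in> sets borel"
  shows "Ginf \<kappa> chi Ip In A a g \<le> Ginf \<kappa> chi Ip In (A(l := K)) a g"
  unfolding Ginf_def by (rule INF_superset_mono[OF admissible_restrict_subset[where K = K and A = A and l = l, OF assms]]) simp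

lemma eventually_compact_subsets_filter:
  assumes "compact K0" "K0 \<subseteq> S" "\<And>K. compact K \<Longrightarrow> K0 \<subseteq> K \<Longrightarrow> K \<subseteq> S \<Longrightarrow> P K"
  shows "eventually P (compact_subsets_filter S)"
  unfolding compact_subsets_filter_def
  by (rule eventually_INF1[of K0]) (use assms in \<open>auto simp: eventually_principal\<close>)

lemma admissible_component_exhaustion:
  assumes weight: "weight_ok \<kappa> (Ip \<union> In) A g" and adm: "\<mu> \<in> admissible \<kappa> Ip In A a g"
    and l: "l \<in> Ip \<union> In" and cl: "closed (A l)"
  obtains Kq where "\<And>n. compact (Kq n)" "\<And>n. Kq n \<subseteq> A l" "incseq Kq"
    "\<And>B. B \<in> sets borel \<Longrightarrow> emeasure (\<mu> l) B = (SUP n. emeasure (\<mu> l) (Kq n \<inter> B))"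
    "(\<lambda>n. \<integral>\<^sup>+ x. ennreal (g x) * indicator (Kq n) x \<partial>\<mu> l) \<longlonglongrightarrow> ennreal (a l)"
proof -
  have rad: "radon (\<mu> l)" and sl: "sets (\<mu> l) = sets borel" and conc: "concentrated (\<mu> l) (A l)"
    and int: "(\<integral>\<^sup>+ x. ennreal (g x) * indicator (A l) x \<partial>\<mu> l) = ennreal (a l)"
    using adm l unfolding admissible_def radon_def by auto
  obtain Kq where Kq: "\<And>n. compact (Kq n)" "\<And>n. Kq n \<subseteq> A l" "incseq Kq"
      "\<And>B. B \<in> sets borel \<Longrightarrow> emeasure (\<mu> l) B = (SUP n. emeasure (\<mu> l) (Kq n \<inter> B))"
    using radon_finite_exhaustion[OF rad admissible_component_finite[OF weight adm l cl] cl
        concentrated_emeasure_Compl[OF sl conc]] by blast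
  have gm: "(\<lambda>x. ennreal (g x) * indicator (A l) x) \<in> borel_measurable borel"
    using weight l cl by (intro borel_measurable_weight_indicator[of "\<Union>i\<in>Ip \<union> In. A i"])
      (auto simp: weight_ok_def borel_closed)
  have "(\<lambda>n. \<integral>\<^sup>+x. (ennreal (g x) * indicator (A l) x) * indicator (Kq n) x \<partial>\<mu> l) \<longlonglongrightarrow> ennreal (a l)"
    using tendsto_nn_integral_exhaustion[OF sl borel_compact[OF Kq(1)] Kq(3,4) gm] int by simp
  then have "(\<lambda>n. \<integral>\<^sup>+x. ennreal (g x) * indicator (Kq n) x \<partial>\<mu> l) \<longlonglongrightarrow> ennreal (a l)"
    by (rule Lim_transform_eventually)
      (use Kq(2) in \<open>force intro!: always_eventually nn_integral_cong split: split_indicator\<close>)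
  with Kq that show ?thesis by blast
qed

lemma summeas_fun_upd_exhaustion:
  assumes sets: "\<And>i. i \<in> J \<Longrightarrow> sets (\<mu> i) = sets borel" and sl: "sets (\<mu> l) = sets borel"
    and K: "\<And>n. K n \<in> sets borel" "incseq K"
    and exh: "\<And>B. B \<in> sets borel \<Longrightarrow> emeasure (\<mu> l) B = (SUP n. emeasure (\<mu> l) (K n \<inter> B))"
    and B: "B \<in> sets borel"
  shows "incseq (\<lambda>n. emeasure (summeas (\<mu>(l := scaled_restriction (\<mu> l) 1 (K n))) J) B)"
    and "(SUP n. emeasure (summeas (\<mu>(l := scaled_restriction (\<mu> l) 1 (K n))) J) B) = emeasure (summeas \<mu> J) B"
proof -
  have sets': "\<And>i n. i \<in> J \<Longrightarrow> sets ((\<mu>(l := scaled_restriction (\<mu> l) 1 (K n))) i) = sets borel"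
    using sets sl by simp
  have inc: "incseq (\<lambda>n. emeasure ((\<mu>(l := scaled_restriction (\<mu> l) 1 (K n))) i) B)" for i
    using scaled_restriction_SUP(1)[OF sl K exh B] by (cases "i = l") auto
  then show "incseq (\<lambda>n. emeasure (summeas (\<mu>(l := scaled_restriction (\<mu> l) 1 (K n))) J) B)"
    unfolding incseq_def using sets' B by (auto intro!: summeas_emeasure_mono)
  show "(SUP n. emeasure (summeas (\<mu>(l := scaled_restriction (\<mu> l) 1 (K n))) J) B) = emeasure (summeas \<mu> J) B"
  proof (rule summeas_SUP[OF sets' sets inc _ B])
    show "(SUP n. emeasure ((\<mu>(l := scaled_restriction (\<mu> l) 1 (K n))) i) B) = emeasure (\<mu> i) B" for i
      using scaled_restriction_SUP(2)[OF sl K exh B] by (cases "i = l") auto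
  qed
qed

lemma admissible_renormalised_restriction:
  fixes \<kappa> :: "'a::t2_space \<Rightarrow> 'a \<Rightarrow> ennreal"
  assumes lsc: "\<forall>t. open {p :: 'a \<times> 'a. t < \<kappa> (fst p) (snd p)}"
    and weight: "weight_ok \<kappa> (Ip \<union> In) A g" and adm: "\<mu> \<in> admissible \<kappa> Ip In A a g"
    and l: "l \<in> Ip \<union> In" and K: "compact K" "K0 \<subseteq> K" "K \<subseteq> A l"
    and pos: "0 < (\<integral>\<^sup>+ x. ennreal (g x) * indicator K0 x \<partial>\<mu> l)"
  defines "c \<equiv> a l / enn2real (\<integral>\<^sup>+ x. ennreal (g x) * indicator K x \<partial>\<mu> l)"
  shows "1 \<le> c" "c \<le> a l / enn2real (\<integral>\<^sup>+ x. ennreal (g x) * indicator K0 x \<partial>\<mu> l)"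
    and "\<mu>(l := scaled_restriction (\<mu> l) c K) \<in> admissible \<kappa> Ip In (A(l := K)) a g"
proof -
  define \<rho> where "\<rho> K = (\<integral>\<^sup>+ x. ennreal (g x) * indicator K x \<partial>\<mu> l)" for K
  have \<rho>_mono: "\<rho> K \<le> \<rho> K'" if "K \<subseteq> K'" for K K'
    unfolding \<rho>_def using that by (intro nn_integral_mono mult_left_mono) (auto split: split_indicator)
  have "\<rho> (A l) = ennreal (a l)"
    using adm l unfolding admissible_def \<rho>_def by auto
  then have \<rho>K: "\<rho> K0 \<le> \<rho> K" "\<rho> K \<le> ennreal (a l)"
    using \<rho>_mono[OF K(2)] \<rho>_mono[OF K(3)] by auto
  have fin: "\<rho> K < \<infinity>" "\<rho> K0 < \<infinity>"
    using le_less_trans[OF \<rho>K(2) ennreal_less_top] le_less_trans[OF \<rho>K(1)] by auto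
  have r0: "0 < enn2real (\<rho> K0)" using pos fin(2) by (simp add: enn2real_positive_iff \<rho>_def)
  moreover have r1: "enn2real (\<rho> K0) \<le> enn2real (\<rho> K)" using \<rho>K(1) fin(1) by (simp add: enn2real_mono)
  moreover have "0 \<le> a l"
    using \<rho>K(2) r0 r1 by (cases "0 \<le> a l") (auto simp: ennreal_neg)
  then have "enn2real (\<rho> K) \<le> a l" using \<rho>K(2) by (intro enn2real_leI)
  ultimately show c: "1 \<le> c" "c \<le> a l / enn2real (\<rho> K0)"
    unfolding c_def \<rho>_def[symmetric] by (auto intro: divide_left_mono)
  have "ennreal c * \<rho> K = ennreal (c * enn2real (\<rho> K))"
    using fin(1) c(1) by (simp add: ennreal_mult)
  also have "c * enn2real (\<rho> K) = a l"
    unfolding c_def \<rho>_def[symmetric] using r0 r1 by simp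
  finally have "ennreal c * \<rho> K = ennreal (a l)" .
  moreover have "(\<lambda>x. ennreal (g x) * indicator K x) \<in> borel_measurable borel"
    using weight l K by (intro borel_measurable_weight_indicator[of "\<Union>i\<in>Ip \<union> In. A i"])
      (auto simp: weight_ok_def borel_compact)
  ultimately show "\<mu>(l := scaled_restriction (\<mu> l) c K) \<in> admissible \<kappa> Ip In (A(l := K)) a g"
    using K c(1) by (intro admissible_scaled_restriction[OF lsc adm l]) (auto simp: \<rho>_def)
qed

lemma eventually_Ginf_restrict_less:
  fixes \<kappa> :: "'a::t2_space \<Rightarrow> 'a \<Rightarrow> ennreal"
  assumes lsc: "\<forall>t. open {p :: 'a \<times> 'a. t < \<kappa> (fst p) (snd p)}"
    and cond: "condenser \<kappa> Ip In A"
    and chi: "energy_space \<kappa> chi"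
    and weight: "weight_ok \<kappa> (Ip \<union> In) A g"
    and a_pos: "\<forall>i\<in>Ip \<union> In. a i > 0"
    and ell: "l \<in> In"
    and adm: "\<mu> \<in> admissible \<kappa> Ip In A a g"
    and less: "Gchi \<kappa> chi Ip In \<mu> < y"
  shows "eventually (\<lambda>K. Ginf \<kappa> chi Ip In (A(l := K)) a g < y) (compact_subsets_filter (A l))"
proof -
  have lI: "l \<in> Ip \<union> In" and lIp: "l \<notin> Ip" and clA: "closed (A l)"
    using cond ell unfolding condenser_def by auto
  have rad: "\<And>i. i \<in> Ip \<union> In \<Longrightarrow> radon (\<mu> i)" using adm unfolding admissible_def by auto
  have setsIn: "\<And>i. i \<in> In \<Longrightarrow> sets (\<mu> i) = sets borel" and sl: "sets (\<mu> l) = sets borel"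
    using rad lI by (auto simp: radon_def)
  have schi: "sets (fst chi) = sets borel" "sets (snd chi) = sets borel"
    using chi unfolding energy_space_def signed_radon_def radon_def by auto
  have al: "a l > 0" using a_pos lI by auto
  define \<rho> where "\<rho> K = (\<integral>\<^sup>+ x. ennreal (g x) * indicator K x \<partial>\<mu> l)" for K
  obtain Kq where Kq: "\<And>n. compact (Kq n)" "\<And>n. Kq n \<subseteq> A l" "incseq Kq"
      "\<And>B. B \<in> sets borel \<Longrightarrow> emeasure (\<mu> l) B = (SUP n. emeasure (\<mu> l) (Kq n \<inter> B))"
    and \<rho>_lim: "(\<lambda>n. \<rho> (Kq n)) \<longlonglongrightarrow> ennreal (a l)"
    using admissible_component_exhaustion[OF weight adm lI clA] unfolding \<rho>_def by blast
  have Kqm: "\<And>n. Kq n \<in> sets borel" using Kq(1) by (rule borel_compact)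
  \<comment> \<open>For a compact \<open>K\<close> between \<open>Kq n\<close> and \<open>A l\<close> the renormalising factor is at most \<open>cq n\<close>.\<close>
  define cq where "cq n = a l / enn2real (\<rho> (Kq n))" for n
  have cq_lim: "cq \<longlonglongrightarrow> 1"
    using tendsto_divide[OF tendsto_const tendsto_enn2real[OF \<rho>_lim], of "a l"] al
    by (simp add: cq_def[abs_def])
  define L where "L n = summeas (\<mu>(l := scaled_restriction (\<mu> l) 1 (Kq n))) In" for n
  define P N where "P = summeas \<mu> Ip" and "N = summeas \<mu> In"
  define H where "H n = Gform (en \<kappa> P P) (ennreal (cq n) * (ennreal (cq n) * en \<kappa> N N)) (en \<kappa> P (L n))
      (en \<kappa> (L n) P) (en \<kappa> (fst chi) P) (ennreal (cq n) * en \<kappa> (snd chi) N) (en \<kappa> (fst chi) (L n))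
      (en \<kappa> (snd chi) P)" for n
  have "H \<longlonglongrightarrow> Gchi \<kappa> chi Ip In \<mu>"
    unfolding H_def Gchi_eq_Gform P_def N_def L_def
  proof (rule Gform_bound_tendsto[OF lsc _ _ _ schi(1) _ _ _ cq_lim])
    show "open_inner_regular (summeas (\<mu>(l := scaled_restriction (\<mu> l) 1 (Kq n))) In)" for n
      using rad radon_scaled_restriction[OF rad[OF lI] Kq(1)]
      by (intro open_inner_regular_summeas) auto
    show "0 \<le> cq n" for n using al by (simp add: cq_def)
    show "incseq (\<lambda>n. emeasure (summeas (\<mu>(l := scaled_restriction (\<mu> l) 1 (Kq n))) In) B)"
      if "B \<in> sets borel" for B
      by (rule summeas_fun_upd_exhaustion(1)[where J = In and \<mu> = \<mu> and l = l, OF setsIn sl Kqm Kq(3) _ that]) (use Kq(4) in auto)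
    show "(SUP n. emeasure (summeas (\<mu>(l := scaled_restriction (\<mu> l) 1 (Kq n))) In) B) =
        emeasure (summeas \<mu> In) B" if "B \<in> sets borel" for B
      by (rule summeas_fun_upd_exhaustion(2)[where J = In and \<mu> = \<mu> and l = l, OF setsIn sl Kqm Kq(3) _ that]) (use Kq(4) in auto)
    show "Gform (en \<kappa> (summeas \<mu> Ip) (summeas \<mu> Ip)) (en \<kappa> (summeas \<mu> In) (summeas \<mu> In))
        (en \<kappa> (summeas \<mu> Ip) (summeas \<mu> In)) (en \<kappa> (summeas \<mu> In) (summeas \<mu> Ip))
        (en \<kappa> (fst chi) (summeas \<mu> Ip)) (en \<kappa> (snd chi) (summeas \<mu> In))
        (en \<kappa> (fst chi) (summeas \<mu> In)) (en \<kappa> (snd chi) (summeas \<mu> Ip)) \<noteq> \<infinity>"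
      using less unfolding Gchi_eq_Gform by auto
  qed simp_all
  then have "eventually (\<lambda>n. H n < y \<and> 0 < \<rho> (Kq n)) sequentially"
    using order_tendstoD(2)[OF _ less] order_tendstoD(1)[OF \<rho>_lim, of 0] al
    by (intro eventually_conj) simp_all
  then obtain n where n: "H n < y" "0 < \<rho> (Kq n)"
    by (auto simp: eventually_sequentially)
  show ?thesis
  proof (rule eventually_compact_subsets_filter[OF Kq(1,2)])
    fix K assume K: "compact K" "Kq n \<subseteq> K" "K \<subseteq> A l"
    define c where "c = a l / enn2real (\<rho> K)"
    note renorm = admissible_renormalised_restriction[OF lsc weight adm lI K(1,2,3) n(2)[unfolded \<rho>_def],
        folded \<rho>_def c_def cq_def]
    have "Ginf \<kappa> chi Ip In (A(l := K)) a g \<le> Gchi \<kappa> chi Ip In (\<mu>(l := scaled_restriction (\<mu> l) c K))"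
      unfolding Ginf_def by (rule INF_lower[OF renorm(3)])
    also have "\<dots> \<le> H n"
      unfolding H_def P_def N_def L_def
      by (rule Gchi_scaled_restriction_le[OF lsc schi rad ell lIp Kq(1) K(1,2) renorm(1,2)])
    finally show "Ginf \<kappa> chi Ip In (A(l := K)) a g < y" using n(1) by simp
  qed
qed

theorem lemma13p1:
  fixes \<kappa> :: "'a::t2_space \<Rightarrow> 'a \<Rightarrow> ennreal"
    and Ip In :: "nat set" and A :: "nat \<Rightarrow> 'a set"
    and a :: "nat \<Rightarrow> real" and g :: "'a \<Rightarrow> real"
    and chi :: "'a smeasure" and h :: real and l :: nat
  assumes loc_compact: "\<forall>x::'a. \<exists>K. compact K \<and> x \<in> interior K"
    and noncompact: "\<not> compact (UNIV :: 'a set)"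
    and lsc: "\<forall>t. open {p :: 'a \<times> 'a. t < \<kappa> (fst p) (snd p)}"
    and symm: "\<forall>x y. \<kappa> x y = \<kappa> y x"
    and spd: "strictly_pos_def \<kappa>"
    and cons: "consistent \<kappa>"
    and offdiag_finite: "\<forall>x y. x \<noteq> y \<longrightarrow> \<kappa> x y < \<infinity>"
    and offdiag_cont: "continuous_on {p :: 'a \<times> 'a. fst p \<noteq> snd p} (\<lambda>p. \<kappa> (fst p) (snd p))"
    and decay: "\<forall>\<epsilon>>0. \<forall>K. compact K \<longrightarrow>
                  (\<exists>K'. compact K' \<and> (\<forall>x\<in>K. \<forall>y. y \<notin> K' \<longrightarrow> \<kappa> x y < \<epsilon>))"
    and h: "h \<ge> 1" "gen_max_principle \<kappa> h"
    and cond: "condenser \<kappa> Ip In A"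
    and chi: "energy_space \<kappa> chi"
      "emeasure (fst chi) UNIV < \<infinity>" "emeasure (snd chi) UNIV < \<infinity>"
      "support (fst chi) \<inter> (\<Union>j\<in>In. A j) = {}"
      "support (snd chi) \<inter> (\<Union>i\<in>Ip. A i) = {}"
    and weight: "weight_ok \<kappa> (Ip \<union> In) A g"
    and a_pos: "\<forall>i\<in>Ip \<union> In. a i > 0"
    and a_sum: "a summable_on (Ip \<union> In)"
    and G_fin: "Ginf \<kappa> chi Ip In A a g < \<infinity>"
    and cap: "{i\<in>Ip \<union> In. capacity \<kappa> (A i) = \<infinity>} = {l}"
    and ell: "l \<in> In"
    and disj: "\<forall>i\<in>Ip \<union> In. i \<noteq> l \<longrightarrow> A i \<inter> A l = {}"
  shows "((\<lambda>K. Ginf \<kappa> chi Ip In (A(l := K)) a g) \<longlongrightarrow> Ginf \<kappa> chi Ip In A a g)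
           (compact_subsets_filter (A l))"
proof (rule order_tendstoI)
  fix y assume y: "y < Ginf \<kappa> chi Ip In A a g"
  show "eventually (\<lambda>K. y < Ginf \<kappa> chi Ip In (A(l := K)) a g) (compact_subsets_filter (A l))"
  proof (rule eventually_compact_subsets_filter[of "{}"])
    fix K assume "compact K" "K \<subseteq> A l"
    then have "Ginf \<kappa> chi Ip In A a g \<le> Ginf \<kappa> chi Ip In (A(l := K)) a g"
      by (intro Ginf_le_Ginf_restrict borel_compact)
    with y show "y < Ginf \<kappa> chi Ip In (A(l := K)) a g" by (rule less_le_trans)
  qed auto
next
  fix y assume "Ginf \<kappa> chi Ip In A a g < y"
  then obtain \<mu> where "\<mu> \<in> admissible \<kappa> Ip In A a g" "Gchi \<kappa> chi Ip In \<mu> < y"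
    unfolding Ginf_def by (auto simp: INF_less_iff)
  then show "eventually (\<lambda>K. Ginf \<kappa> chi Ip In (A(l := K)) a g < y) (compact_subsets_filter (A l))"
    by (rule eventually_Ginf_restrict_less[OF lsc cond chi(1) weight a_pos ell])
qed

end
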